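(* Let $V$ be a Banach $\mathbb O$-bimodule, let $T\in\mathscr B_{\mathcal{RO}}(V)$ be power-associative and let $s\in\mathbb O$ with $|s|>\|T\|$. Then $R_s-T$ is invertible in $\mathscr B_{\mathbb R}(V)$ and $$(R_s-T)^{\circledcirc-}=\sum_{n\ge0}T^n\odot s^{-1-n},\qquad (R_s-T)^{-\circledcirc}=\sum_{n\ge0}s^{-1-n}\odot T^n,$$ the series converging (pointwise in norm) in $\mathscr B_{\mathcal{RO}}(V)$.
   Context: $\mathbb O$ is the real octonion algebra with basis $e_0=1,\dots,e_7$, conjugation $\bar x$, norm $|x|$. An $\mathbb O$-bimodule is a real vector space $M$ with real-bilinear left and right multiplications by $\mathbb O$ (with $1x=x1=x$) whose associators $[p,q,x]=(pq)x-p(qx)$, $[p,x,q]=(px)q-p(xq)$, $[x,p,q]=(xp)q-x(pq)$ satisfy $[p,q,x]=[q,x,p]=[x,p,q]=-[q,p,x]$. Its real part is $\operatorname{Re}M=\{m: pm=mp,\ [p,q,m]=0\ \forall p,q\}$; every $x$ decomposes uniquely as $x=\sum_{i=0}^7e_ix_i$ with $x_i\in\operatorname{Re}M$ and $\operatorname{Re}x:=x_0$. A Banach $\mathbb O$-bimodule is one with a complete norm with $\|px\|=\|xp\|=|p|\|x\|$. $\mathscr B_{\mathbb R}(V)$: bounded real-linear operators, ordinary composition and powers; $T$ is invertible if it has an inverse in $\mathscr B_{\mathbb R}(V)$. $R_sv=vs$. For real-linear $f$, $B_p(f,x)=f(x)p-f(xp)$; $f$ is right para-linear if $\operatorname{Re}B_p(f,x)=0$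 for all $p,x$; $\mathscr B_{\mathcal{RO}}(V)$ denotes bounded right para-linear operators, an $\mathbb O$-bimodule via $(p\odot f)(x)=pf(x)+B_p(f,x)$, $(f\odot p)(x)=f(px)-B_p(f,x)$. $T\in\mathscr B_{\mathcal{RO}}(V)$ is power-associative if $T^n\in\mathscr B_{\mathcal{RO}}(V)$ for all $n\in\mathbb N$. For real-linear $h:\operatorname{Re}V\to V$, $(\operatorname{ext}h)(\sum_ix_ie_i)=\sum_ih(x_i)e_i$ ($x_i\in\operatorname{Re}V$); for real-linear $h:V\to\operatorname{Re}V$, $(\operatorname{lif}h)(x)=\sum_{i=0}^7h(x\bar e_i)e_i$. For invertible $S\in\mathscr B_{\mathbb R}(V)$, the right and left regular inverses are $S^{\circledcirc-}=\operatorname{ext}(S^{-1}|_{\operatorname{Re}V})$ and $S^{-\circledcirc}=\operatorname{lif}(\operatorname{Re}\circ S^{-1})$. *)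

theory Defs
  imports "HOL-Analysis.Analysis"
begin

text \<open>Quaternions are pairs of complex numbers, octonions pairs of quaternions, with
  the Cayley--Dickson product (a,b)(c,d) = (ac - conj(d) b, d a + b conj(c)) and
  conjugation conj(a,b) = (conj a, -b).  The underlying real vector space is the
  product space, whose (product) norm is exactly the Euclidean octonion norm.\<close>

type_synonym quat = "complex \<times> complex"
type_synonym oct = "quat \<times> quat"

definition qmult :: "quat \<Rightarrow> quat \<Rightarrow> quat" where
  "qmult x y = (fst x * fst y - cnj (snd y) * snd x, snd y * fst x + snd x * cnj (fst y))"

definition qcnj :: "quat \<Rightarrow> quat" where
  "qcnj x = (cnj (fst x), - snd x)"

definition omult :: "oct \<Rightarrow> oct \<Rightarrow> oct" where
  "omult x y = (qmult (fst x) (fst y) - qmult (qcnj (snd y)) (snd x),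
                qmult (snd y) (fst x) + qmult (snd x) (qcnj (fst y)))"

definition ocnj :: "oct \<Rightarrow> oct" where
  "ocnj x = (qcnj (fst x), - snd x)"

definition oone :: oct where
  "oone = ((1, 0), (0, 0))"

definition obasis :: "nat \<Rightarrow> oct" where
  "obasis i = (if i = 0 then ((1,0),(0,0))
          else if i = 1 then ((\<i>,0),(0,0))
          else if i = 2 then ((0,1),(0,0))
          else if i = 3 then ((0,\<i>),(0,0))
          else if i = 4 then ((0,0),(1,0))
          else if i = 5 then ((0,0),(\<i>,0))
          else if i = 6 then ((0,0),(0,1))
          else if i = 7 then ((0,0),(0,\<i>))
          else 0)"

definition oinv :: "oct \<Rightarrow> oct" where
  "oinv s = (1 / (norm s)\<^sup>2) *\<^sub>R ocnj s"

primrec opow :: "oct \<Rightarrow> nat \<Rightarrow> oct" where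
  "opow s 0 = oone"
| "opow s (Suc n) = omult s (opow s n)"

text \<open>lm p x = p x (left multiplication), rm x p = x p (right multiplication).\<close>

definition assocL :: "(oct \<Rightarrow> 'v::real_vector \<Rightarrow> 'v) \<Rightarrow> oct \<Rightarrow> oct \<Rightarrow> 'v \<Rightarrow> 'v" where
  "assocL lm p q x = lm (omult p q) x - lm p (lm q x)"

definition assocM :: "(oct \<Rightarrow> 'v::real_vector \<Rightarrow> 'v) \<Rightarrow> ('v \<Rightarrow> oct \<Rightarrow> 'v) \<Rightarrow> oct \<Rightarrow> 'v \<Rightarrow> oct \<Rightarrow> 'v" where
  "assocM lm rm p x q = rm (lm p x) q - lm p (rm x q)"

definition assocR :: "('v \<Rightarrow> oct \<Rightarrow> 'v::real_vector) \<Rightarrow> 'v \<Rightarrow> oct \<Rightarrow> oct \<Rightarrow> 'v" where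
  "assocR rm x p q = rm (rm x p) q - rm x (omult p q)"

definition O_bimodule :: "(oct \<Rightarrow> 'v::real_vector \<Rightarrow> 'v) \<Rightarrow> ('v \<Rightarrow> oct \<Rightarrow> 'v) \<Rightarrow> bool" where
  "O_bimodule lm rm \<longleftrightarrow>
     (\<forall>x. linear (\<lambda>p. lm p x)) \<and> (\<forall>p. linear (lm p)) \<and>
     (\<forall>x. linear (\<lambda>p. rm x p)) \<and> (\<forall>p. linear (\<lambda>x. rm x p)) \<and>
     (\<forall>x. lm oone x = x \<and> rm x oone = x) \<and>
     (\<forall>p q x. assocL lm p q x = assocM lm rm q x p \<and>
              assocM lm rm q x p = assocR rm x p q \<and>
              assocR rm x p q = - assocL lm q p x)"

definition Banach_O_bimodule :: "(oct \<Rightarrow> 'v::banach \<Rightarrow> 'v) \<Rightarrow> ('v \<Rightarrow> oct \<Rightarrow> 'v) \<Rightarrow> bool" where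
  "Banach_O_bimodule lm rm \<longleftrightarrow> O_bimodule lm rm \<and>
     (\<forall>p x. norm (lm p x) = norm p * norm x \<and> norm (rm x p) = norm p * norm x)"

definition ReM :: "(oct \<Rightarrow> 'v::real_vector \<Rightarrow> 'v) \<Rightarrow> ('v \<Rightarrow> oct \<Rightarrow> 'v) \<Rightarrow> 'v set" where
  "ReM lm rm = {m. (\<forall>p. lm p m = rm m p) \<and> (\<forall>p q. assocL lm p q m = 0)}"

definition odecomp :: "(oct \<Rightarrow> 'v::real_vector \<Rightarrow> 'v) \<Rightarrow> ('v \<Rightarrow> oct \<Rightarrow> 'v) \<Rightarrow> 'v \<Rightarrow> nat \<Rightarrow> 'v" where
  "odecomp lm rm x = (THE xs. (\<forall>i<8. xs i \<in> ReM lm rm) \<and> (\<forall>i\<ge>8. xs i = 0) \<and>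
                         x = (\<Sum>i<8. lm (obasis i) (xs i)))"

definition ReV :: "(oct \<Rightarrow> 'v::real_vector \<Rightarrow> 'v) \<Rightarrow> ('v \<Rightarrow> oct \<Rightarrow> 'v) \<Rightarrow> 'v \<Rightarrow> 'v" where
  "ReV lm rm x = odecomp lm rm x 0"

definition Bp :: "('v \<Rightarrow> oct \<Rightarrow> 'v::real_vector) \<Rightarrow> oct \<Rightarrow> ('v \<Rightarrow> 'v) \<Rightarrow> 'v \<Rightarrow> 'v" where
  "Bp rm p f x = rm (f x) p - f (rm x p)"

definition right_paralinear :: "(oct \<Rightarrow> 'v::real_vector \<Rightarrow> 'v) \<Rightarrow> ('v \<Rightarrow> oct \<Rightarrow> 'v) \<Rightarrow> ('v \<Rightarrow> 'v) \<Rightarrow> bool" where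
  "right_paralinear lm rm f \<longleftrightarrow> linear f \<and> (\<forall>p x. ReV lm rm (Bp rm p f x) = 0)"

definition BRO :: "(oct \<Rightarrow> 'v::real_normed_vector \<Rightarrow> 'v) \<Rightarrow> ('v \<Rightarrow> oct \<Rightarrow> 'v) \<Rightarrow> ('v \<Rightarrow> 'v) set" where
  "BRO lm rm = {f. bounded_linear f \<and> right_paralinear lm rm f}"

definition lsmult :: "(oct \<Rightarrow> 'v::real_vector \<Rightarrow> 'v) \<Rightarrow> ('v \<Rightarrow> oct \<Rightarrow> 'v) \<Rightarrow> oct \<Rightarrow> ('v \<Rightarrow> 'v) \<Rightarrow> 'v \<Rightarrow> 'v" where
  "lsmult lm rm p f x = lm p (f x) + Bp rm p f x"

definition rsmult :: "(oct \<Rightarrow> 'v::real_vector \<Rightarrow> 'v) \<Rightarrow> ('v \<Rightarrow> oct \<Rightarrow> 'v) \<Rightarrow> ('v \<Rightarrow> 'v) \<Rightarrow> oct \<Rightarrow> 'v \<Rightarrow> 'v" where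
  "rsmult lm rm f p x = f (lm p x) - Bp rm p f x"

definition power_associative :: "(oct \<Rightarrow> 'v::real_normed_vector \<Rightarrow> 'v) \<Rightarrow> ('v \<Rightarrow> oct \<Rightarrow> 'v) \<Rightarrow> ('v \<Rightarrow> 'v) \<Rightarrow> bool" where
  "power_associative lm rm T \<longleftrightarrow> T \<in> BRO lm rm \<and> (\<forall>n. T ^^ n \<in> BRO lm rm)"

definition invertible_op :: "('v::real_normed_vector \<Rightarrow> 'v) \<Rightarrow> bool" where
  "invertible_op S \<longleftrightarrow> bounded_linear S \<and>
     (\<exists>g. bounded_linear g \<and> g \<circ> S = id \<and> S \<circ> g = id)"

definition oext :: "(oct \<Rightarrow> 'v::real_vector \<Rightarrow> 'v) \<Rightarrow> ('v \<Rightarrow> oct \<Rightarrow> 'v) \<Rightarrow> ('v \<Rightarrow> 'v) \<Rightarrow> 'v \<Rightarrow> 'v" where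
  "oext lm rm h x = (\<Sum>i<8. rm (h (odecomp lm rm x i)) (obasis i))"

definition olif :: "(oct \<Rightarrow> 'v::real_vector \<Rightarrow> 'v) \<Rightarrow> ('v \<Rightarrow> oct \<Rightarrow> 'v) \<Rightarrow> ('v \<Rightarrow> 'v) \<Rightarrow> 'v \<Rightarrow> 'v" where
  "olif lm rm h x = (\<Sum>i<8. rm (h (rm x (ocnj (obasis i)))) (obasis i))"

definition right_reg_inv :: "(oct \<Rightarrow> 'v::real_vector \<Rightarrow> 'v) \<Rightarrow> ('v \<Rightarrow> oct \<Rightarrow> 'v) \<Rightarrow> ('v \<Rightarrow> 'v) \<Rightarrow> 'v \<Rightarrow> 'v" where
  "right_reg_inv lm rm S = oext lm rm (inv S)"

definition left_reg_inv :: "(oct \<Rightarrow> 'v::real_vector \<Rightarrow> 'v) \<Rightarrow> ('v \<Rightarrow> oct \<Rightarrow> 'v) \<Rightarrow> ('v \<Rightarrow> 'v) \<Rightarrow> 'v \<Rightarrow> 'v" where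
  "left_reg_inv lm rm S = olif lm rm (\<lambda>x. ReV lm rm (inv S x))"

end

(* In an octonion bimodule the left multiplications L_1, ..., L_7 by the imaginary units
   satisfy the Clifford relations, right multiplications are combinations of them, and the
   product L_1 ... L_7 acts as -1.  Averaging over the seven quaternionic triples therefore
   projects onto the real part, which yields the decomposition x = sum e_i x_i with real x_i
   and shows that the real part is a bounded linear map.  Hence right para-linear maps commute
   with right multiplication on real elements, and para-linearity survives the operations
   p . f, f . p and pointwise limits.

   For |s| > |T| one has R_s - T = R_s (1 - K) with K = R_(s^-1) T of norm below 1, so
   R_s - T has a bounded inverse given by a Neumann series.  On a real element r the terms
   T^n(r) s^(-1-n) telescope against R_s - T, which identifies the right series with the
   inverse; the left series telescopes in the same way after taking real parts.  Expanding
   an arbitrary x in its real coordinates then gives both regular inverses. *)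

theory Submission
  imports Defs
begin

declare One_nat_def [simp del] \<comment> \<open>keeps basis indices such as \<open>obasis 1\<close> from turning into \<open>Suc 0\<close>\<close>

section \<open>Octonion arithmetic\<close>

definition omk :: "real \<Rightarrow> real \<Rightarrow> real \<Rightarrow> real \<Rightarrow> real \<Rightarrow> real \<Rightarrow> real \<Rightarrow> real \<Rightarrow> oct" where
  "omk a0 a1 a2 a3 a4 a5 a6 a7 = ((Complex a0 a1, Complex a2 a3), (Complex a4 a5, Complex a6 a7))"

lemma omk_cases: obtains a0 a1 a2 a3 a4 a5 a6 a7 where "x = omk a0 a1 a2 a3 a4 a5 a6 a7"
  by (metis omk_def complex.exhaust_sel prod.collapse)

lemma omult_omk: "omult (omk a0 a1 a2 a3 a4 a5 a6 a7) (omk b0 b1 b2 b3 b4 b5 b6 b7) =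
  omk (a0 * b0 - a1 * b1 - a2 * b2 - a3 * b3 - a4 * b4 - a5 * b5 - a6 * b6 - a7 * b7)
      (a0 * b1 + a1 * b0 + a2 * b3 - a3 * b2 + a4 * b5 - a5 * b4 - a6 * b7 + a7 * b6)
      (a0 * b2 - a1 * b3 + a2 * b0 + a3 * b1 + a4 * b6 + a5 * b7 - a6 * b4 - a7 * b5)
      (a0 * b3 + a1 * b2 - a2 * b1 + a3 * b0 + a4 * b7 - a5 * b6 + a6 * b5 - a7 * b4)
      (a0 * b4 - a1 * b5 - a2 * b6 - a3 * b7 + a4 * b0 + a5 * b1 + a6 * b2 + a7 * b3)
      (a0 * b5 + a1 * b4 - a2 * b7 + a3 * b6 - a4 * b1 + a5 * b0 - a6 * b3 + a7 * b2)
      (a0 * b6 + a1 * b7 + a2 * b4 - a3 * b5 - a4 * b2 + a5 * b3 + a6 * b0 - a7 * b1)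
      (a0 * b7 - a1 * b6 + a2 * b5 + a3 * b4 - a4 * b3 - a5 * b2 + a6 * b1 + a7 * b0)"
  by (simp add: omk_def omult_def qmult_def qcnj_def Complex_eq algebra_simps)

lemma norm_omk:
  "norm (omk a0 a1 a2 a3 a4 a5 a6 a7) = sqrt (a0\<^sup>2 + a1\<^sup>2 + a2\<^sup>2 + a3\<^sup>2 + a4\<^sup>2 + a5\<^sup>2 + a6\<^sup>2 + a7\<^sup>2)"
  by (simp add: omk_def norm_Pair cmod_def add.assoc)

lemma omk_add: "omk a0 a1 a2 a3 a4 a5 a6 a7 + omk b0 b1 b2 b3 b4 b5 b6 b7 =
    omk (a0 + b0) (a1 + b1) (a2 + b2) (a3 + b3) (a4 + b4) (a5 + b5) (a6 + b6) (a7 + b7)"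
  by (simp add: omk_def complex_eq_iff)

lemma omk_diff: "omk a0 a1 a2 a3 a4 a5 a6 a7 - omk b0 b1 b2 b3 b4 b5 b6 b7 =
    omk (a0 - b0) (a1 - b1) (a2 - b2) (a3 - b3) (a4 - b4) (a5 - b5) (a6 - b6) (a7 - b7)"
  by (simp add: omk_def complex_eq_iff)

lemma omk_minus: "- omk a0 a1 a2 a3 a4 a5 a6 a7 = omk (- a0) (- a1) (- a2) (- a3) (- a4) (- a5) (- a6) (- a7)"
  by (simp add: omk_def complex_eq_iff)

lemma scaleR_omk: "c *\<^sub>R omk a0 a1 a2 a3 a4 a5 a6 a7 =
    omk (c * a0) (c * a1) (c * a2) (c * a3) (c * a4) (c * a5) (c * a6) (c * a7)"
  by (simp add: omk_def Complex_eq scaleR_conv_of_real algebra_simps)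

lemma omk_eq_iff: "omk a0 a1 a2 a3 a4 a5 a6 a7 = omk b0 b1 b2 b3 b4 b5 b6 b7 \<longleftrightarrow>
    a0 = b0 \<and> a1 = b1 \<and> a2 = b2 \<and> a3 = b3 \<and> a4 = b4 \<and> a5 = b5 \<and> a6 = b6 \<and> a7 = b7"
  by (simp add: omk_def)

lemma oone_omk: "oone = omk 1 0 0 0 0 0 0 0"
  by (simp add: oone_def omk_def one_complex.code zero_complex.code)

lemma ocnj_omk: "ocnj (omk a0 a1 a2 a3 a4 a5 a6 a7) = omk a0 (- a1) (- a2) (- a3) (- a4) (- a5) (- a6) (- a7)"
  by (simp add: omk_def ocnj_def qcnj_def Complex_eq)

lemma obasis_omk:
  "obasis 0 = omk 1 0 0 0 0 0 0 0" "obasis 1 = omk 0 1 0 0 0 0 0 0" "obasis 2 = omk 0 0 1 0 0 0 0 0"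
  "obasis 3 = omk 0 0 0 1 0 0 0 0" "obasis 4 = omk 0 0 0 0 1 0 0 0" "obasis 5 = omk 0 0 0 0 0 1 0 0"
  "obasis 6 = omk 0 0 0 0 0 0 1 0" "obasis 7 = omk 0 0 0 0 0 0 0 1"
  by (simp_all add: obasis_def omk_def one_complex.code zero_complex.code imaginary_unit.code zero_prod_def)

lemmas omk_arith = omult_omk omk_add omk_diff omk_minus scaleR_omk omk_eq_iff

lemma norm_omult: "norm (omult x y) = norm x * norm y"
proof -
  obtain a0 a1 a2 a3 a4 a5 a6 a7 where x: "x = omk a0 a1 a2 a3 a4 a5 a6 a7" by (rule omk_cases)
  obtain b0 b1 b2 b3 b4 b5 b6 b7 where y: "y = omk b0 b1 b2 b3 b4 b5 b6 b7" by (rule omk_cases)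
  show ?thesis unfolding x y omult_omk norm_omk
    by (simp add: real_sqrt_mult[symmetric]) (simp add: algebra_simps power2_eq_square)
qed

lemma omult_add_left: "omult (x + y) z = omult x z + omult y z"
  by (simp add: omult_def qmult_def qcnj_def algebra_simps)

lemma omult_add_right: "omult x (y + z) = omult x y + omult x z"
  by (simp add: omult_def qmult_def qcnj_def algebra_simps)

lemma omult_scaleR_left: "omult (r *\<^sub>R x) z = r *\<^sub>R omult x z"
  by (simp add: omult_def qmult_def qcnj_def algebra_simps scaleR_conv_of_real)

lemma omult_scaleR_right: "omult x (r *\<^sub>R z) = r *\<^sub>R omult x z"
  by (simp add: omult_def qmult_def qcnj_def algebra_simps scaleR_conv_of_real)

lemma omult_diff_left: "omult (x - y) z = omult x z - omult y z"
  by (simp add: omult_def qmult_def qcnj_def algebra_simps)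

lemma omult_diff_right: "omult x (y - z) = omult x y - omult x z"
  by (simp add: omult_def qmult_def qcnj_def algebra_simps)

lemma omult_oone_left: "omult oone x = x"
  by (rule omk_cases[of x]) (simp add: oone_omk omk_arith)

lemma omult_oone_right: "omult x oone = x"
  by (rule omk_cases[of x]) (simp add: oone_omk omk_arith)

lemma obasis_0: "obasis 0 = oone"
  by (simp add: obasis_def oone_def)

lemma obasis_mult_upper:
  "omult (obasis 1) (obasis 2) = obasis 3" "omult (obasis 1) (obasis 3) = - obasis 2" "omult (obasis 1) (obasis 4) = obasis 5"
  "omult (obasis 1) (obasis 5) = - obasis 4" "omult (obasis 1) (obasis 6) = - obasis 7" "omult (obasis 1) (obasis 7) = obasis 6"
  "omult (obasis 2) (obasis 3) = obasis 1" "omult (obasis 2) (obasis 4) = obasis 6" "omult (obasis 2) (obasis 5) = obasis 7"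
  "omult (obasis 2) (obasis 6) = - obasis 4" "omult (obasis 2) (obasis 7) = - obasis 5" "omult (obasis 3) (obasis 4) = obasis 7"
  "omult (obasis 3) (obasis 5) = - obasis 6" "omult (obasis 3) (obasis 6) = obasis 5" "omult (obasis 3) (obasis 7) = - obasis 4"
  "omult (obasis 4) (obasis 5) = obasis 1" "omult (obasis 4) (obasis 6) = obasis 2" "omult (obasis 4) (obasis 7) = obasis 3"
  "omult (obasis 5) (obasis 6) = - obasis 3" "omult (obasis 5) (obasis 7) = obasis 2" "omult (obasis 6) (obasis 7) = - obasis 1"
  by (simp_all add: omult_def qmult_def qcnj_def obasis_def zero_prod_def)

lemma obasis_square:
  assumes "0 < i" "i < 8"
  shows "omult (obasis i) (obasis i) = - oone"
proof -
  have "i = 1 \<or> i = 2 \<or> i = 3 \<or> i = 4 \<or> i = 5 \<or> i = 6 \<or> i = 7"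
    using assms by arith
  then show ?thesis by (elim disjE) (simp_all add: omult_def qmult_def qcnj_def obasis_def oone_def)
qed

lemma obasis_anticommute:
  assumes "0 < i" "i < j" "j < 8"
  shows "omult (obasis j) (obasis i) = - omult (obasis i) (obasis j)"
proof -
  have "i = 1 \<or> i = 2 \<or> i = 3 \<or> i = 4 \<or> i = 5 \<or> i = 6"
    and "j = 2 \<or> j = 3 \<or> j = 4 \<or> j = 5 \<or> j = 6 \<or> j = 7"
    using assms by arith+
  with assms(2) show ?thesis
    by (elim disjE) (simp_all add: omult_def qmult_def qcnj_def obasis_def zero_prod_def)
qed

text \<open>\<open>index_arith\<close> discharges the side conditions on numeral indices, so that \<open>simp only\<close>
  with \<open>obasis_mult\<close> evaluates every product of two basis elements.\<close>

lemmas index_arith =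
  zero_less_one zero_less_numeral one_less_numeral_iff numeral_less_iff less_num_simps le_num_simps

lemmas obasis_mult = obasis_mult_upper obasis_square obasis_anticommute index_arith

lemma ocnj_obasis:
  "ocnj (obasis 0) = obasis 0" "ocnj (obasis 1) = - obasis 1" "ocnj (obasis 2) = - obasis 2"
  "ocnj (obasis 3) = - obasis 3" "ocnj (obasis 4) = - obasis 4" "ocnj (obasis 5) = - obasis 5"
  "ocnj (obasis 6) = - obasis 6" "ocnj (obasis 7) = - obasis 7"
  by (simp_all add: obasis_omk ocnj_omk omk_minus)

definition ocoord :: "oct \<Rightarrow> nat \<Rightarrow> real" where
  "ocoord x i = (if i = 0 then Re (fst (fst x)) else if i = 1 then Im (fst (fst x))
     else if i = 2 then Re (snd (fst x)) else if i = 3 then Im (snd (fst x))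
     else if i = 4 then Re (fst (snd x)) else if i = 5 then Im (fst (snd x))
     else if i = 6 then Re (snd (snd x)) else if i = 7 then Im (snd (snd x)) else 0)"

definition ore :: "oct \<Rightarrow> real" where
  "ore x = ocoord x 0"

lemma ocoord_omk:
  "ocoord (omk a0 a1 a2 a3 a4 a5 a6 a7) 0 = a0" "ocoord (omk a0 a1 a2 a3 a4 a5 a6 a7) 1 = a1"
  "ocoord (omk a0 a1 a2 a3 a4 a5 a6 a7) 2 = a2" "ocoord (omk a0 a1 a2 a3 a4 a5 a6 a7) 3 = a3"
  "ocoord (omk a0 a1 a2 a3 a4 a5 a6 a7) 4 = a4" "ocoord (omk a0 a1 a2 a3 a4 a5 a6 a7) 5 = a5"
  "ocoord (omk a0 a1 a2 a3 a4 a5 a6 a7) 6 = a6" "ocoord (omk a0 a1 a2 a3 a4 a5 a6 a7) 7 = a7"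
  by (simp_all add: ocoord_def omk_def)

lemma ore_omk: "ore (omk a0 a1 a2 a3 a4 a5 a6 a7) = a0"
  by (simp add: ore_def ocoord_omk)

lemma sum_lessThan_8:
  "(\<Sum>i<(8::nat). f i) = f 0 + f 1 + f 2 + f 3 + f 4 + f 5 + f 6 + (f 7 :: 'a::comm_monoid_add)"
  by (simp add: eval_nat_numeral One_nat_def add.assoc add.commute add.left_commute)

lemma octonion_expansion: "p = (\<Sum>i<8. ocoord p i *\<^sub>R obasis i)"
  by (rule omk_cases[of p]) (simp add: sum_lessThan_8 obasis_omk ocoord_omk scaleR_omk omk_add)

lemma ocoord_obasis:
  assumes "k < 8"
  shows "ocoord (obasis k) i = (if i = k then 1 else 0)"
proof -
  have "k = 0 \<or> k = 1 \<or> k = 2 \<or> k = 3 \<or> k = 4 \<or> k = 5 \<or> k = 6 \<or> k = 7"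
    using assms by arith
  then show ?thesis by (elim disjE) (simp_all add: ocoord_def obasis_def)
qed

lemma ore_ocnj_omult: "ore (omult (ocnj a) b) = (\<Sum>i<8. ocoord a i * ocoord b i)"
proof -
  obtain a0 a1 a2 a3 a4 a5 a6 a7 where a: "a = omk a0 a1 a2 a3 a4 a5 a6 a7" by (rule omk_cases)
  obtain b0 b1 b2 b3 b4 b5 b6 b7 where b: "b = omk b0 b1 b2 b3 b4 b5 b6 b7" by (rule omk_cases)
  show ?thesis unfolding a b sum_lessThan_8 ocnj_omk omult_omk ore_omk ocoord_omk by simp
qed

lemma ore_ocnj_obasis_omult:
  assumes "k < 8" "j < 8"
  shows "ore (omult (ocnj (obasis k)) (obasis j)) = (if k = j then 1 else 0)"
  using assms(1) by (simp add: ore_ocnj_omult ocoord_obasis assms if_distrib[of "\<lambda>x. x * _"] sum.delta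
      cong: if_cong)

lemma ore_omult_omk: "ore (omult (omk a0 a1 a2 a3 a4 a5 a6 a7) (omk b0 b1 b2 b3 b4 b5 b6 b7)) =
    a0 * b0 - a1 * b1 - a2 * b2 - a3 * b3 - a4 * b4 - a5 * b5 - a6 * b6 - a7 * b7"
  by (simp only: omult_omk ore_omk)

lemma ore_omult_assoc: "ore (omult (omult a p) q) = ore (omult a (omult p q))"
proof -
  obtain a0 a1 a2 a3 a4 a5 a6 a7 where a: "a = omk a0 a1 a2 a3 a4 a5 a6 a7" by (rule omk_cases)
  obtain b0 b1 b2 b3 b4 b5 b6 b7 where p: "p = omk b0 b1 b2 b3 b4 b5 b6 b7" by (rule omk_cases)
  obtain c0 c1 c2 c3 c4 c5 c6 c7 where q: "q = omk c0 c1 c2 c3 c4 c5 c6 c7" by (rule omk_cases)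
  show ?thesis unfolding a p q
    by (subst (2) omult_omk, subst (1) omult_omk, simp only: ore_omult_omk) (simp add: algebra_simps)
qed

lemma ore_omult_commute: "ore (omult p a) = ore (omult a p)"
proof -
  obtain a0 a1 a2 a3 a4 a5 a6 a7 where a: "a = omk a0 a1 a2 a3 a4 a5 a6 a7" by (rule omk_cases)
  obtain b0 b1 b2 b3 b4 b5 b6 b7 where p: "p = omk b0 b1 b2 b3 b4 b5 b6 b7" by (rule omk_cases)
  show ?thesis unfolding a p omult_omk ore_omk by (simp add: algebra_simps)
qed

lemma norm_ocnj: "norm (ocnj s) = norm s"
  by (rule omk_cases[of s]) (simp add: ocnj_omk norm_omk)

lemma ocnj_eq: "ocnj s = (2 * ore s) *\<^sub>R oone - s"
  by (rule omk_cases[of s]) (simp add: ocnj_omk ore_omk oone_omk omk_arith)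

lemma omult_ocnj: "omult s (ocnj s) = (norm s)\<^sup>2 *\<^sub>R oone" "omult (ocnj s) s = (norm s)\<^sup>2 *\<^sub>R oone"
  by (rule omk_cases[of s], simp add: omk_arith ocnj_omk norm_omk oone_omk power2_eq_square algebra_simps)+

lemma omult_oinv:
  assumes "s \<noteq> 0"
  shows "omult s (oinv s) = oone" "omult (oinv s) s = oone"
  using assms by (simp_all add: oinv_def omult_scaleR_left omult_scaleR_right omult_ocnj)

lemma norm_oinv: "norm (oinv s) = 1 / norm s"
  by (simp add: oinv_def norm_ocnj power2_eq_square)

lemma norm_opow: "norm (opow s n) = norm s ^ n"
  by (induct n) (simp_all add: norm_omult oone_def norm_Pair)

text \<open>The real span of \<open>1\<close> and \<open>s\<close> is a commutative and associative subalgebra containing all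
  powers of \<open>s\<inverse>\<close>; this is the only associativity the resolvent series needs.\<close>

definition oplane :: "oct \<Rightarrow> oct set" where
  "oplane s = {a *\<^sub>R oone + b *\<^sub>R s | a b. True}"

lemma oone_in_oplane: "oone \<in> oplane s"
  unfolding oplane_def by (rule CollectI, rule exI[of _ 1], rule exI[of _ 0]) simp

lemma self_in_oplane: "s \<in> oplane s"
  unfolding oplane_def by (rule CollectI, rule exI[of _ 0], rule exI[of _ 1]) simp

lemma oinv_in_oplane: "oinv s \<in> oplane s"
  unfolding oplane_def oinv_def ocnj_eq
  by (rule CollectI, rule exI[of _ "2 * ore s / (norm s)\<^sup>2"], rule exI[of _ "- 1 / (norm s)\<^sup>2"])
    (simp add: algebra_simps)

lemma oplane_elim:
  assumes "x \<in> oplane s"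
  obtains a b where "x = a *\<^sub>R oone + b *\<^sub>R s"
  using assms unfolding oplane_def by blast

lemma omult_self: "omult s s = (2 * ore s) *\<^sub>R s - (norm s)\<^sup>2 *\<^sub>R oone"
  by (rule omk_cases[of s]) (simp add: omk_arith norm_omk ore_omk oone_omk power2_eq_square algebra_simps)

lemma omult_in_oplane:
  assumes "x \<in> oplane s" "y \<in> oplane s"
  shows "omult x y \<in> oplane s"
proof -
  obtain a b where x: "x = a *\<^sub>R oone + b *\<^sub>R s" using assms(1) by (rule oplane_elim)
  obtain c d where y: "y = c *\<^sub>R oone + d *\<^sub>R s" using assms(2) by (rule oplane_elim)
  have "omult x y = (a * c - b * d * (norm s)\<^sup>2) *\<^sub>R oone + (a * d + b * c + 2 * b * d * ore s) *\<^sub>R s"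
    unfolding x y by (simp add: omult_add_left omult_add_right omult_scaleR_left omult_scaleR_right
        omult_oone_left omult_oone_right omult_self algebra_simps)
  then show ?thesis unfolding oplane_def by blast
qed

lemma opow_in_oplane: "t \<in> oplane s \<Longrightarrow> opow t n \<in> oplane s"
  by (induct n) (simp_all add: oone_in_oplane omult_in_oplane)

lemma oplane_commute:
  assumes "x \<in> oplane s" "y \<in> oplane s"
  shows "omult x y = omult y x"
proof -
  obtain a b where x: "x = a *\<^sub>R oone + b *\<^sub>R s" using assms(1) by (rule oplane_elim)
  obtain c d where y: "y = c *\<^sub>R oone + d *\<^sub>R s" using assms(2) by (rule oplane_elim)
  show ?thesis unfolding x y
    by (simp add: omult_add_left omult_add_right omult_scaleR_left omult_scaleR_right
        omult_oone_left omult_oone_right algebra_simps)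
qed

lemma oplane_assoc:
  assumes "x \<in> oplane s" "y \<in> oplane s" "z \<in> oplane s"
  shows "omult (omult x y) z = omult x (omult y z)"
proof -
  obtain a b where x: "x = a *\<^sub>R oone + b *\<^sub>R s" using assms(1) by (rule oplane_elim)
  obtain c d where y: "y = c *\<^sub>R oone + d *\<^sub>R s" using assms(2) by (rule oplane_elim)
  obtain e f where z: "z = e *\<^sub>R oone + f *\<^sub>R s" using assms(3) by (rule oplane_elim)
  have sss: "omult (omult s s) s = omult s (omult s s)"
    by (simp add: omult_self omult_diff_left omult_diff_right omult_scaleR_left omult_scaleR_right
        omult_oone_left omult_oone_right)
  show ?thesis unfolding x y z
    by (simp add: omult_add_left omult_add_right omult_scaleR_left omult_scaleR_right
        omult_oone_left omult_oone_right sss algebra_simps)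
qed

lemma omult_opow_oinv:
  assumes "s \<noteq> 0"
  shows "omult s (opow (oinv s) (Suc n)) = opow (oinv s) n"
    and "omult (opow (oinv s) (Suc n)) s = opow (oinv s) n"
proof -
  have pl: "oinv s \<in> oplane s" "opow (oinv s) n \<in> oplane s" "s \<in> oplane s"
    by (simp_all add: oinv_in_oplane opow_in_oplane self_in_oplane)
  have "omult s (opow (oinv s) (Suc n)) = omult (omult s (oinv s)) (opow (oinv s) n)"
    using oplane_assoc[OF pl(3,1,2)] by simp
  also have "\<dots> = opow (oinv s) n"
    by (simp add: omult_oinv[OF assms] omult_oone_left)
  finally show left: "omult s (opow (oinv s) (Suc n)) = opow (oinv s) n" .
  show "omult (opow (oinv s) (Suc n)) s = opow (oinv s) n"
    using oplane_commute[OF opow_in_oplane[OF pl(1)] pl(3), of "Suc n"] left by simp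
qed

section \<open>Octonion bimodules\<close>

lemma eq_neg_self_iff: "(x::'a::real_vector) = - x \<longleftrightarrow> x = 0"
  by (simp add: eq_neg_iff_add_eq_0 scaleR_2[symmetric])

lemma eq_neg_twice_self_iff: "(x::'a::real_vector) = - x - x \<longleftrightarrow> x = 0"
proof -
  have "x - (- x - x) = (3::real) *\<^sub>R x"
    using scaleR_left_distrib[of 2 1 x] by (simp add: scaleR_2)
  then show ?thesis
    unfolding eq_iff_diff_eq_0[of x "- x - x"] by simp
qed

locale octonion_bimodule =
  fixes lm :: "oct \<Rightarrow> 'v::real_normed_vector \<Rightarrow> 'v" and rm :: "'v \<Rightarrow> oct \<Rightarrow> 'v"
  assumes bimodule: "O_bimodule lm rm"
begin

abbreviation L :: "nat \<Rightarrow> 'v \<Rightarrow> 'v" where "L i \<equiv> lm (obasis i)"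
abbreviation R :: "nat \<Rightarrow> 'v \<Rightarrow> 'v" where "R i x \<equiv> rm x (obasis i)"

lemma linear_lm: "linear (lm p)" and linear_lm_left: "linear (\<lambda>p. lm p x)"
  and linear_rm: "linear (rm x)" and linear_rm_left: "linear (\<lambda>x. rm x p)"
  using bimodule unfolding O_bimodule_def by blast+

lemma lm_oone [simp]: "lm oone x = x" and rm_oone [simp]: "rm x oone = x"
  using bimodule unfolding O_bimodule_def by blast+

lemma assoc_cyclic:
  "assocL lm p q x = assocM lm rm q x p" "assocM lm rm q x p = assocR rm x p q"
  "assocR rm x p q = - assocL lm q p x"
  using bimodule unfolding O_bimodule_def by blast+

lemma lm_add: "lm p (x + y) = lm p x + lm p y"
  and lm_diff: "lm p (x - y) = lm p x - lm p y"
  and lm_minus: "lm p (- x) = - lm p x"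
  and lm_scaleR: "lm p (c *\<^sub>R x) = c *\<^sub>R lm p x"
  and lm_zero: "lm p 0 = 0"
  and lm_sum: "lm p (\<Sum>i\<in>A. f i) = (\<Sum>i\<in>A. lm p (f i))"
  using linear_lm[of p] by (simp_all add: linear_add linear_diff linear_neg linear_scale linear_0 linear_sum)

lemma lm_add_left: "lm (p + q) x = lm p x + lm q x"
  using linear_add[OF linear_lm_left[of x]] by simp

lemma lm_diff_left: "lm (p - q) x = lm p x - lm q x"
  using linear_diff[OF linear_lm_left[of x]] by simp

lemma lm_minus_left: "lm (- p) x = - lm p x"
  using linear_neg[OF linear_lm_left[of x]] by simp

lemma lm_scaleR_left: "lm (c *\<^sub>R p) x = c *\<^sub>R lm p x"
  using linear_scale[OF linear_lm_left[of x]] by simp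

lemma lm_sum_left: "lm (\<Sum>i\<in>A. f i) x = (\<Sum>i\<in>A. lm (f i) x)"
  using linear_sum[OF linear_lm_left[of x]] by simp

lemma rm_add: "rm (x + y) p = rm x p + rm y p"
  using linear_add[OF linear_rm_left[of p]] by simp

lemma rm_diff: "rm (x - y) p = rm x p - rm y p"
  using linear_diff[OF linear_rm_left[of p]] by simp

lemma rm_minus: "rm (- x) p = - rm x p"
  using linear_neg[OF linear_rm_left[of p]] by simp

lemma rm_scaleR: "rm (c *\<^sub>R x) p = c *\<^sub>R rm x p"
  using linear_scale[OF linear_rm_left[of p]] by simp

lemma rm_zero: "rm 0 p = 0"
  using linear_0[OF linear_rm_left[of p]] by simp

lemma rm_sum: "rm (\<Sum>i\<in>A. f i) p = (\<Sum>i\<in>A. rm (f i) p)"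
  using linear_sum[OF linear_rm_left[of p]] by simp

lemma rm_add_right: "rm x (p + q) = rm x p + rm x q"
  and rm_diff_right: "rm x (p - q) = rm x p - rm x q"
  and rm_minus_right: "rm x (- p) = - rm x p"
  and rm_scaleR_right: "rm x (c *\<^sub>R p) = c *\<^sub>R rm x p"
  and rm_sum_right: "rm x (\<Sum>i\<in>A. f i) = (\<Sum>i\<in>A. rm x (f i))"
  using linear_rm[of x] by (simp_all add: linear_add linear_diff linear_neg linear_scale linear_sum)

lemma L_0: "L 0 x = x" and R_0: "R 0 x = x"
  by (simp_all add: obasis_0)

lemmas lin_simps = lm_oone rm_oone lm_add lm_diff lm_minus lm_scaleR lm_zero lm_add_left lm_diff_left lm_minus_left
  lm_scaleR_left rm_add rm_diff rm_minus rm_scaleR rm_zero rm_add_right rm_diff_right rm_minus_right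
  rm_scaleR_right L_0 R_0

lemma assocL_anticommute: "assocL lm p q x = - assocL lm q p x"
  using assoc_cyclic(1,2,3)[where p=p and q=q and x=x] by simp

lemma assocR_anticommute: "assocR rm x p q = - assocR rm x q p"
  using assoc_cyclic(2,3)[where p=p and q=q and x=x] assoc_cyclic(1,2)[where p=q and q=p and x=x]
  by simp

lemma lm_alternative: "lm (omult p p) x = lm p (lm p x)"
  using assocL_anticommute[of p p x, unfolded eq_neg_self_iff] by (simp add: assocL_def)

lemma rm_alternative: "rm (rm x p) p = rm x (omult p p)"
  using assocR_anticommute[of x p p, unfolded eq_neg_self_iff] by (simp add: assocR_def)

lemma rm_rm_oplane:
  assumes "a \<in> oplane s" "b \<in> oplane s"
  shows "rm (rm x a) b = rm x (omult a b)"
proof -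
  obtain a1 a2 where a: "a = a1 *\<^sub>R oone + a2 *\<^sub>R s" using assms(1) by (rule oplane_elim)
  obtain b1 b2 where b: "b = b1 *\<^sub>R oone + b2 *\<^sub>R s" using assms(2) by (rule oplane_elim)
  show ?thesis unfolding a b
    by (simp add: lin_simps omult_add_left omult_add_right omult_scaleR_left omult_scaleR_right
        omult_oone_left omult_oone_right rm_alternative algebra_simps)
qed

lemma L_square: "0 < i \<Longrightarrow> i < 8 \<Longrightarrow> L i (L i y) = - y"
  by (simp add: lm_alternative[symmetric] obasis_square lm_minus_left)

lemma L_anticommute:
  assumes "0 < i" "i < j" "j < 8"
  shows "L j (L i y) = - L i (L j y)"
  using assocL_anticommute[of "obasis j" "obasis i" y]
  by (simp add: assocL_def obasis_anticommute[OF assms] lm_minus_left minus_equation_iff)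

lemmas L_normalize = L_square L_anticommute index_arith

definition dLM :: "nat \<Rightarrow> nat \<Rightarrow> 'v \<Rightarrow> 'v" where
  "dLM i j x = assocL lm (obasis i) (obasis j) x - assocM lm rm (obasis j) x (obasis i)"

definition dMR :: "nat \<Rightarrow> nat \<Rightarrow> 'v \<Rightarrow> 'v" where
  "dMR i j x = assocM lm rm (obasis j) x (obasis i) - assocR rm x (obasis i) (obasis j)"

definition dRL :: "nat \<Rightarrow> nat \<Rightarrow> 'v \<Rightarrow> 'v" where
  "dRL i j x = assocR rm x (obasis i) (obasis j) + assocL lm (obasis j) (obasis i) x"

lemma dLM_zero: "dLM i j x = 0" and dMR_zero: "dMR i j x = 0" and dRL_zero: "dRL i j x = 0"
  using assoc_cyclic[where p="obasis i" and q="obasis j" and x=x]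
  by (simp_all add: dLM_def dMR_def dRL_def)

text \<open>Each
  certificate below writes the difference as a combination of the associator defects
  \<open>dLM\<close>, \<open>dMR\<close>, \<open>dRL\<close>, which vanish by the bimodule axiom.\<close>

lemma R1_via_L:
  "R 1 y = - (1/2) *\<^sub>R L 1 y + (1/2) *\<^sub>R L 2 (L 3 y) + (1/2) *\<^sub>R L 4 (L 5 y) - (1/2) *\<^sub>R L 6 (L 7 y)"
  (is "?lhs = ?rhs")
proof -
  have "?lhs - ?rhs = (1/2) *\<^sub>R
      (dLM 2 3 y - dLM 3 2 y - dLM 4 2 (L 7 y) + dLM 4 5 y - dLM 4 7 (L 2 y) + dLM 7 2 (R 4 y)
       + dMR 2 3 y - dMR 2 7 (R 4 y) - dMR 3 2 y - dMR 4 2 (L 7 y) + dMR 4 5 y - dMR 4 7 (L 2 y)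
       - dMR 6 7 y + dMR 7 2 (R 4 y) + dRL 2 3 y - dRL 2 7 (R 4 y) - dRL 4 7 (L 2 y) - dRL 6 7 y
       + L 4 (dLM 2 7 y) + L 4 (dMR 2 7 y) + L 4 (dRL 2 7 y) + L 7 (dLM 4 2 y) + L 7 (dMR 4 2 y)
       - R 2 (dMR 4 7 y))"
    unfolding dLM_def dMR_def dRL_def assocL_def assocM_def assocR_def
    by (simp only: lin_simps obasis_mult; norm)
  also have "\<dots> = 0"
    by (simp add: dLM_zero dMR_zero dRL_zero lin_simps)
  finally show ?thesis by simp
qed

lemma R2_via_L:
  "R 2 y = - (1/2) *\<^sub>R L 1 (L 3 y) - (1/2) *\<^sub>R L 2 y + (1/2) *\<^sub>R L 4 (L 6 y) + (1/2) *\<^sub>R L 5 (L 7 y)"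
  (is "?lhs = ?rhs")
proof -
  have "?lhs - ?rhs = (1/2) *\<^sub>R
      (- dLM 1 3 y + dLM 3 1 y + dLM 4 1 (L 7 y) + dLM 4 6 y + dLM 4 7 (L 1 y) - dLM 7 1 (R 4 y)
       - dMR 1 3 y + dMR 1 7 (R 4 y) + dMR 3 1 y + dMR 4 1 (L 7 y) + dMR 4 6 y + dMR 4 7 (L 1 y)
       + dMR 5 7 y - dMR 7 1 (R 4 y) - dRL 1 3 y + dRL 1 7 (R 4 y) + dRL 4 7 (L 1 y) + dRL 5 7 y
       - L 4 (dLM 1 7 y) - L 4 (dMR 1 7 y) - L 4 (dRL 1 7 y) - L 7 (dLM 4 1 y) - L 7 (dMR 4 1 y)
       + R 1 (dMR 4 7 y))"
    unfolding dLM_def dMR_def dRL_def assocL_def assocM_def assocR_def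
    by (simp only: lin_simps obasis_mult; norm)
  also have "\<dots> = 0"
    by (simp add: dLM_zero dMR_zero dRL_zero lin_simps)
  finally show ?thesis by simp
qed

lemma R3_via_L:
  "R 3 y = (1/2) *\<^sub>R L 1 (L 2 y) - (1/2) *\<^sub>R L 3 y + (1/2) *\<^sub>R L 4 (L 7 y) - (1/2) *\<^sub>R L 5 (L 6 y)"
  (is "?lhs = ?rhs")
proof -
  have "?lhs - ?rhs = (1/2) *\<^sub>R
      (dLM 1 2 y - dLM 2 1 y - dLM 4 1 (L 6 y) - dLM 4 6 (L 1 y) + dLM 4 7 y + dLM 6 1 (R 4 y)
       + dMR 1 2 y - dMR 1 6 (R 4 y) - dMR 2 1 y - dMR 4 1 (L 6 y) - dMR 4 6 (L 1 y) + dMR 4 7 y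
       - dMR 5 6 y + dMR 6 1 (R 4 y) + dRL 1 2 y - dRL 1 6 (R 4 y) - dRL 4 6 (L 1 y) - dRL 5 6 y
       + L 4 (dLM 1 6 y) + L 4 (dMR 1 6 y) + L 4 (dRL 1 6 y) + L 6 (dLM 4 1 y) + L 6 (dMR 4 1 y)
       - R 1 (dMR 4 6 y))"
    unfolding dLM_def dMR_def dRL_def assocL_def assocM_def assocR_def
    by (simp only: lin_simps obasis_mult; norm)
  also have "\<dots> = 0"
    by (simp add: dLM_zero dMR_zero dRL_zero lin_simps)
  finally show ?thesis by simp
qed

lemma R4_via_L:
  "R 4 y = - (1/2) *\<^sub>R L 1 (L 5 y) - (1/2) *\<^sub>R L 2 (L 6 y) - (1/2) *\<^sub>R L 3 (L 7 y) - (1/2) *\<^sub>R L 4 y"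
  (is "?lhs = ?rhs")
proof -
  have "?lhs - ?rhs = (1/2) *\<^sub>R
      (- dLM 1 5 y - dLM 2 1 (L 7 y) - dLM 2 6 y - dLM 2 7 (L 1 y) + dLM 5 1 y + dLM 7 1 (R 2 y)
       - dMR 1 5 y - dMR 1 7 (R 2 y) - dMR 2 1 (L 7 y) - dMR 2 6 y - dMR 2 7 (L 1 y) - dMR 3 7 y
       + dMR 5 1 y + dMR 7 1 (R 2 y) - dRL 1 5 y - dRL 1 7 (R 2 y) - dRL 2 7 (L 1 y) - dRL 3 7 y
       + L 2 (dLM 1 7 y) + L 2 (dMR 1 7 y) + L 2 (dRL 1 7 y) + L 7 (dLM 2 1 y) + L 7 (dMR 2 1 y)
       - R 1 (dMR 2 7 y))"
    unfolding dLM_def dMR_def dRL_def assocL_def assocM_def assocR_def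
    by (simp only: lin_simps obasis_mult; norm)
  also have "\<dots> = 0"
    by (simp add: dLM_zero dMR_zero dRL_zero lin_simps)
  finally show ?thesis by simp
qed

lemma R5_via_L:
  "R 5 y = (1/2) *\<^sub>R L 1 (L 4 y) - (1/2) *\<^sub>R L 2 (L 7 y) + (1/2) *\<^sub>R L 3 (L 6 y) - (1/2) *\<^sub>R L 5 y"
  (is "?lhs = ?rhs")
proof -
  have "?lhs - ?rhs = (1/2) *\<^sub>R
      (dLM 1 4 y + dLM 2 1 (L 6 y) + dLM 2 6 (L 1 y) - dLM 2 7 y - dLM 4 1 y - dLM 6 1 (R 2 y)
       + dMR 1 4 y + dMR 1 6 (R 2 y) + dMR 2 1 (L 6 y) + dMR 2 6 (L 1 y) - dMR 2 7 y + dMR 3 6 y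
       - dMR 4 1 y - dMR 6 1 (R 2 y) + dRL 1 4 y + dRL 1 6 (R 2 y) + dRL 2 6 (L 1 y) + dRL 3 6 y
       - L 2 (dLM 1 6 y) - L 2 (dMR 1 6 y) - L 2 (dRL 1 6 y) - L 6 (dLM 2 1 y) - L 6 (dMR 2 1 y)
       + R 1 (dMR 2 6 y))"
    unfolding dLM_def dMR_def dRL_def assocL_def assocM_def assocR_def
    by (simp only: lin_simps obasis_mult; norm)
  also have "\<dots> = 0"
    by (simp add: dLM_zero dMR_zero dRL_zero lin_simps)
  finally show ?thesis by simp
qed

lemma R6_via_L:
  "R 6 y = (1/2) *\<^sub>R L 1 (L 7 y) + (1/2) *\<^sub>R L 2 (L 4 y) - (1/2) *\<^sub>R L 3 (L 5 y) - (1/2) *\<^sub>R L 6 y"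
  (is "?lhs = ?rhs")
proof -
  have "?lhs - ?rhs = (1/2) *\<^sub>R
      (dLM 1 7 y - dLM 2 1 (L 5 y) + dLM 2 4 y - dLM 2 5 (L 1 y) + dLM 5 1 (R 2 y) - dLM 7 1 y
       - dMR 1 5 (R 2 y) + dMR 1 7 y - dMR 2 1 (L 5 y) + dMR 2 4 y - dMR 2 5 (L 1 y) - dMR 3 5 y
       + dMR 5 1 (R 2 y) - dMR 7 1 y - dRL 1 5 (R 2 y) + dRL 1 7 y - dRL 2 5 (L 1 y) - dRL 3 5 y
       + L 2 (dLM 1 5 y) + L 2 (dMR 1 5 y) + L 2 (dRL 1 5 y) + L 5 (dLM 2 1 y) + L 5 (dMR 2 1 y)
       - R 1 (dMR 2 5 y))"
    unfolding dLM_def dMR_def dRL_def assocL_def assocM_def assocR_def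
    by (simp only: lin_simps obasis_mult; norm)
  also have "\<dots> = 0"
    by (simp add: dLM_zero dMR_zero dRL_zero lin_simps)
  finally show ?thesis by simp
qed

lemma R7_via_L:
  "R 7 y = - (1/2) *\<^sub>R L 1 (L 6 y) + (1/2) *\<^sub>R L 2 (L 5 y) + (1/2) *\<^sub>R L 3 (L 4 y) - (1/2) *\<^sub>R L 7 y"
  (is "?lhs = ?rhs")
proof -
  have "?lhs - ?rhs = (1/2) *\<^sub>R
      (- dLM 1 6 y + dLM 2 1 (L 4 y) + dLM 2 4 (L 1 y) + dLM 2 5 y - dLM 4 1 (R 2 y) + dLM 6 1 y
       + dMR 1 4 (R 2 y) - dMR 1 6 y + dMR 2 1 (L 4 y) + dMR 2 4 (L 1 y) + dMR 2 5 y + dMR 3 4 y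
       - dMR 4 1 (R 2 y) + dMR 6 1 y + dRL 1 4 (R 2 y) - dRL 1 6 y + dRL 2 4 (L 1 y) + dRL 3 4 y
       - L 2 (dLM 1 4 y) - L 2 (dMR 1 4 y) - L 2 (dRL 1 4 y) - L 4 (dLM 2 1 y) - L 4 (dMR 2 1 y)
       + R 1 (dMR 2 4 y))"
    unfolding dLM_def dMR_def dRL_def assocL_def assocM_def assocR_def
    by (simp only: lin_simps obasis_mult; norm)
  also have "\<dots> = 0"
    by (simp add: dLM_zero dMR_zero dRL_zero lin_simps)
  finally show ?thesis by simp
qed

text \<open>Together with the Clifford relations \<open>L_normalize\<close>, the fact that the volume element acts as
  \<open>-1\<close> reduces every word in the \<open>L i\<close> to one of length at most three.\<close>

lemma L_omega: "L 1 (L 2 (L 3 (L 4 (L 5 (L 6 (L 7 y)))))) = - y"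
proof -
  define \<rho> where "\<rho> z = - L 1 (L 2 (L 3 z)) - L 1 (L 4 (L 5 z)) + L 1 (L 6 (L 7 z))
    + L 2 (L 3 (L 4 (L 5 z))) - L 2 (L 3 (L 6 (L 7 z))) - L 4 (L 5 (L 6 (L 7 z)))" for z
  have \<rho>_zero: "\<rho> z = 0" for z
  proof -
    have "R 1 (R 1 z) = - z"
      using rm_alternative[of z "obasis 1"] by (simp add: obasis_square rm_minus_right)
    moreover have "\<rho> z = 2 *\<^sub>R (R 1 (R 1 z) + z)"
      unfolding \<rho>_def by (simp only: R1_via_L lin_simps L_normalize; norm)
    ultimately show ?thesis by simp
  qed
  have "L 1 (L 2 (L 3 (L 4 (L 5 (L 6 (L 7 y)))))) + y = (2/3) *\<^sub>R \<rho> y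
      - (1/3) *\<^sub>R L 1 (L 2 (L 3 (\<rho> y))) - (1/3) *\<^sub>R L 1 (L 4 (L 5 (\<rho> y)))
      + (1/3) *\<^sub>R L 1 (L 6 (L 7 (\<rho> y)))"
    unfolding \<rho>_def by (simp only: lin_simps L_normalize; norm)
  then show ?thesis by (simp add: \<rho>_zero lin_simps eq_neg_iff_add_eq_0)
qed

lemma L4_via_omega:
  "L a (L b (L c (L d y))) = - L a (L b (L c (L d (L 1 (L 2 (L 3 (L 4 (L 5 (L 6 (L 7 y))))))))))"
  by (simp add: L_omega lm_minus)

lemma L_four_to_three:
  "L 1 (L 2 (L 3 (L 4 y))) = - L 5 (L 6 (L 7 y))" "L 1 (L 2 (L 3 (L 5 y))) = L 4 (L 6 (L 7 y))"
  "L 1 (L 2 (L 3 (L 6 y))) = - L 4 (L 5 (L 7 y))" "L 1 (L 2 (L 3 (L 7 y))) = L 4 (L 5 (L 6 y))"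
  "L 1 (L 2 (L 4 (L 5 y))) = - L 3 (L 6 (L 7 y))" "L 1 (L 2 (L 4 (L 6 y))) = L 3 (L 5 (L 7 y))"
  "L 1 (L 2 (L 4 (L 7 y))) = - L 3 (L 5 (L 6 y))" "L 1 (L 2 (L 5 (L 6 y))) = - L 3 (L 4 (L 7 y))"
  "L 1 (L 2 (L 5 (L 7 y))) = L 3 (L 4 (L 6 y))" "L 1 (L 2 (L 6 (L 7 y))) = - L 3 (L 4 (L 5 y))"
  "L 1 (L 3 (L 4 (L 5 y))) = L 2 (L 6 (L 7 y))" "L 1 (L 3 (L 4 (L 6 y))) = - L 2 (L 5 (L 7 y))"
  "L 1 (L 3 (L 4 (L 7 y))) = L 2 (L 5 (L 6 y))" "L 1 (L 3 (L 5 (L 6 y))) = L 2 (L 4 (L 7 y))"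
  "L 1 (L 3 (L 5 (L 7 y))) = - L 2 (L 4 (L 6 y))" "L 1 (L 3 (L 6 (L 7 y))) = L 2 (L 4 (L 5 y))"
  "L 1 (L 4 (L 5 (L 6 y))) = - L 2 (L 3 (L 7 y))" "L 1 (L 4 (L 5 (L 7 y))) = L 2 (L 3 (L 6 y))"
  "L 1 (L 4 (L 6 (L 7 y))) = - L 2 (L 3 (L 5 y))" "L 1 (L 5 (L 6 (L 7 y))) = L 2 (L 3 (L 4 y))"
  "L 2 (L 3 (L 4 (L 5 y))) = - L 1 (L 6 (L 7 y))" "L 2 (L 3 (L 4 (L 6 y))) = L 1 (L 5 (L 7 y))"
  "L 2 (L 3 (L 4 (L 7 y))) = - L 1 (L 5 (L 6 y))" "L 2 (L 3 (L 5 (L 6 y))) = - L 1 (L 4 (L 7 y))"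
  "L 2 (L 3 (L 5 (L 7 y))) = L 1 (L 4 (L 6 y))" "L 2 (L 3 (L 6 (L 7 y))) = - L 1 (L 4 (L 5 y))"
  "L 2 (L 4 (L 5 (L 6 y))) = L 1 (L 3 (L 7 y))" "L 2 (L 4 (L 5 (L 7 y))) = - L 1 (L 3 (L 6 y))"
  "L 2 (L 4 (L 6 (L 7 y))) = L 1 (L 3 (L 5 y))" "L 2 (L 5 (L 6 (L 7 y))) = - L 1 (L 3 (L 4 y))"
  "L 3 (L 4 (L 5 (L 6 y))) = - L 1 (L 2 (L 7 y))" "L 3 (L 4 (L 5 (L 7 y))) = L 1 (L 2 (L 6 y))"
  "L 3 (L 4 (L 6 (L 7 y))) = - L 1 (L 2 (L 5 y))" "L 3 (L 5 (L 6 (L 7 y))) = L 1 (L 2 (L 4 y))"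
  "L 4 (L 5 (L 6 (L 7 y))) = - L 1 (L 2 (L 3 y))"
  by (subst L4_via_omega, (simp only: lin_simps L_normalize; norm))+

lemma ReM_lm_eq_rm: "m \<in> ReM lm rm \<Longrightarrow> lm p m = rm m p"
  unfolding ReM_def by blast

lemma ReM_assocL: "m \<in> ReM lm rm \<Longrightarrow> assocL lm p q m = 0"
  unfolding ReM_def by blast

lemma ReM_lm_lm: "m \<in> ReM lm rm \<Longrightarrow> lm p (lm q m) = lm (omult p q) m"
  using ReM_assocL[of m p q] unfolding assocL_def by simp

lemma ReM_rm_rm: "m \<in> ReM lm rm \<Longrightarrow> rm (rm m p) q = rm m (omult p q)"
  using ReM_assocL[of m q p] assoc_cyclic(3)[where x=m and p=p and q=q] unfolding assocR_def by simp

lemma ReM_rm_lm: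
  assumes "m \<in> ReM lm rm"
  shows "rm (lm a m) p = lm (omult a p) m"
proof -
  have "rm (lm a m) p = lm a (rm m p)"
    using ReM_assocL[OF assms, of p a] assoc_cyclic(1)[where p=p and q=a and x=m]
    unfolding assocM_def by simp
  also have "\<dots> = lm (omult a p) m"
    using assms by (simp add: ReM_lm_eq_rm[symmetric] ReM_lm_lm)
  finally show ?thesis .
qed

lemma ReM_intro:
  assumes commute: "\<And>j. j < 8 \<Longrightarrow> L j m = R j m"
  shows "m \<in> ReM lm rm"
proof -
  have lm_eq_rm: "lm p m = rm m p" for p
  proof -
    have "lm p m = (\<Sum>i<8. ocoord p i *\<^sub>R L i m)"
      by (subst octonion_expansion[of p]) (simp add: lm_sum_left lm_scaleR_left)
    also have "\<dots> = (\<Sum>i<8. ocoord p i *\<^sub>R R i m)"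
      by (simp add: commute)
    also have "\<dots> = rm m p"
      by (subst (2) octonion_expansion[of p]) (simp add: rm_sum_right rm_scaleR_right)
    finally show ?thesis .
  qed
  have "assocL lm p q m = 0" for p q
  proof -
    have "assocL lm p q m = assocR rm m q p + assocL lm q p m"
      using assoc_cyclic(1)[where p=p and q=q and x=m]
      unfolding assocM_def assocR_def assocL_def by (simp add: lm_eq_rm)
    also have "\<dots> = - assocL lm p q m - assocL lm p q m"
      using assoc_cyclic(3)[where p=q and q=p and x=m] assocL_anticommute[of q p m] by simp
    finally show ?thesis by (simp only: eq_neg_twice_self_iff)
  qed
  with lm_eq_rm show ?thesis unfolding ReM_def by simp
qed

text \<open>The seven operators \<open>\<plusminus>L a \<circ> L b \<circ> L c\<close>, one for each quaternionic triple
  \<open>e\<^sub>a e\<^sub>b = \<plusminus>e\<^sub>c\<close> and signed to fix real elements, are commuting involutions; \<open>re_part\<close> is the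
  averaging projector onto their common fixed space.\<close>

definition re_part :: "'v \<Rightarrow> 'v" where
  "re_part y = (1/8) *\<^sub>R (y - L 1 (L 2 (L 3 y)) - L 1 (L 4 (L 5 y)) + L 1 (L 6 (L 7 y))
    - L 2 (L 4 (L 6 y)) - L 2 (L 5 (L 7 y)) - L 3 (L 4 (L 7 y)) + L 3 (L 5 (L 6 y)))"

lemma linear_re_part: "linear re_part"
proof (rule linearI)
  show "re_part (x + y) = re_part x + re_part y" for x y
    unfolding re_part_def by (simp only: lin_simps; norm)
  show "re_part (c *\<^sub>R x) = c *\<^sub>R re_part x" for c x
    unfolding re_part_def by (simp add: lin_simps algebra_simps)
qed

lemma re_part_add: "re_part (x + y) = re_part x + re_part y"
  and re_part_diff: "re_part (x - y) = re_part x - re_part y"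
  and re_part_minus: "re_part (- x) = - re_part x"
  and re_part_scaleR: "re_part (c *\<^sub>R x) = c *\<^sub>R re_part x"
  and re_part_zero: "re_part 0 = 0"
  and re_part_sum: "re_part (\<Sum>i\<in>A. f i) = (\<Sum>i\<in>A. re_part (f i))"
  using linear_re_part
  by (simp_all add: linear_add linear_diff linear_neg linear_scale linear_0 linear_sum)

lemma re_part_in_ReM: "re_part y \<in> ReM lm rm"
proof (rule ReM_intro)
  fix j :: nat
  assume "j < 8"
  then have "j = 0 \<or> j = 1 \<or> j = 2 \<or> j = 3 \<or> j = 4 \<or> j = 5 \<or> j = 6 \<or> j = 7" by arith
  then show "L j (re_part y) = R j (re_part y)"
    unfolding re_part_def
    by (elim disjE; simp only: R1_via_L R2_via_L R3_via_L R4_via_L R5_via_L R6_via_L R7_via_L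
        lin_simps L_normalize L_four_to_three; norm)
qed

definition rcoord :: "'v \<Rightarrow> nat \<Rightarrow> 'v" where
  "rcoord x i = re_part (lm (ocnj (obasis i)) x)"

lemma rcoord_in_ReM: "rcoord x i \<in> ReM lm rm"
  by (simp add: rcoord_def re_part_in_ReM)

lemma decomposition: "x = (\<Sum>i<8. L i (rcoord x i))"
  unfolding sum_lessThan_8 rcoord_def ocnj_obasis re_part_def
  by (simp only: lin_simps L_normalize L_four_to_three; norm)

lemma re_part_L_ReM:
  assumes r: "r \<in> ReM lm rm" and "i < 8"
  shows "re_part (L i r) = (if i = 0 then r else 0)"
proof (cases "i = 0")
  case True
  show ?thesis
    unfolding True re_part_def by (simp only: ReM_lm_lm[OF r] obasis_mult lin_simps if_True; norm)
next
  case False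
  then have "i = 1 \<or> i = 2 \<or> i = 3 \<or> i = 4 \<or> i = 5 \<or> i = 6 \<or> i = 7"
    using \<open>i < 8\<close> by arith
  then have "re_part (L i r) = 0"
    by (elim disjE; simp only: re_part_def ReM_lm_lm[OF r] obasis_mult lin_simps; simp)
  with False show ?thesis by simp
qed

lemma re_part_lm_ReM:
  assumes "r \<in> ReM lm rm"
  shows "re_part (lm a r) = ore a *\<^sub>R r"
proof -
  have "re_part (lm a r) = (\<Sum>i<8. ocoord a i *\<^sub>R re_part (L i r))"
    by (subst octonion_expansion[of a]) (simp add: lm_sum_left lm_scaleR_left re_part_sum re_part_scaleR)
  also have "\<dots> = ore a *\<^sub>R r"
    by (simp add: re_part_L_ReM[OF assms] ore_def if_distrib[of "scaleR _"] sum.delta cong: if_cong)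
  finally show ?thesis .
qed

lemma re_part_sum_lm_ReM:
  assumes "\<And>i. r i \<in> ReM lm rm"
  shows "re_part (\<Sum>i<8. lm (a i) (r i)) = (\<Sum>i<8. ore (a i) *\<^sub>R r i)"
  by (simp add: re_part_sum re_part_lm_ReM assms)

lemma rcoord_unique:
  assumes real: "\<forall>i<8. xs i \<in> ReM lm rm" and x: "x = (\<Sum>i<8. L i (xs i))" and "k < 8"
  shows "rcoord x k = xs k"
proof -
  have "rcoord x k = re_part (\<Sum>i<8. lm (omult (ocnj (obasis k)) (obasis i)) (xs i))"
    unfolding rcoord_def x using real by (simp add: lm_sum ReM_lm_lm)
  also have "\<dots> = (\<Sum>i<8. ore (omult (ocnj (obasis k)) (obasis i)) *\<^sub>R xs i)"
    using real by (simp add: re_part_sum re_part_lm_ReM)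
  also have "\<dots> = xs k"
    using \<open>k < 8\<close> by (simp add: ore_ocnj_obasis_omult if_distrib[of "\<lambda>c. c *\<^sub>R _"] sum.delta cong: if_cong)
  finally show ?thesis .
qed

lemma odecomp_eq: "odecomp lm rm x = (\<lambda>i. if i < 8 then rcoord x i else 0)"
  unfolding odecomp_def
proof (rule the_equality)
  show "(\<forall>i<8. (if i < 8 then rcoord x i else 0) \<in> ReM lm rm) \<and> (\<forall>i\<ge>8. (if i < 8 then rcoord x i else 0) = 0)
      \<and> x = (\<Sum>i<8. L i (if i < 8 then rcoord x i else 0))"
    using rcoord_in_ReM decomposition[of x] by simp
next
  fix xs
  assume "(\<forall>i<8. xs i \<in> ReM lm rm) \<and> (\<forall>i\<ge>8. xs i = 0) \<and> x = (\<Sum>i<8. L i (xs i))"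
  then show "xs = (\<lambda>i. if i < 8 then rcoord x i else 0)"
    using rcoord_unique[of xs x] by (auto simp: fun_eq_iff not_less)
qed

lemma ReV_eq_re_part: "ReV lm rm x = re_part x"
  by (simp add: ReV_def odecomp_eq rcoord_def ocnj_obasis L_0)

lemma re_part_lm_eq_rm: "re_part (lm p y) = re_part (rm y p)"
proof -
  have "lm p y = (\<Sum>i<8. lm (omult p (obasis i)) (rcoord y i))"
    by (subst decomposition[of y]) (simp add: lm_sum ReM_lm_lm rcoord_in_ReM)
  moreover have "rm y p = (\<Sum>i<8. lm (omult (obasis i) p) (rcoord y i))"
    by (subst decomposition[of y]) (simp add: rm_sum ReM_rm_lm rcoord_in_ReM)
  ultimately show ?thesis
    by (simp add: re_part_sum_lm_ReM rcoord_in_ReM ore_omult_commute)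
qed

lemma re_part_rm_rm: "re_part (rm (rm y p) q) = re_part (rm y (omult p q))"
proof -
  have "rm (rm y p) q = (\<Sum>i<8. lm (omult (omult (obasis i) p) q) (rcoord y i))"
    by (subst decomposition[of y]) (simp add: rm_sum ReM_rm_lm rcoord_in_ReM)
  moreover have "rm y (omult p q) = (\<Sum>i<8. lm (omult (obasis i) (omult p q)) (rcoord y i))"
    by (subst decomposition[of y]) (simp add: rm_sum ReM_rm_lm rcoord_in_ReM)
  ultimately show ?thesis
    by (simp add: re_part_sum_lm_ReM rcoord_in_ReM ore_omult_assoc)
qed

lemma re_part_rm_lm: "re_part (rm (lm p y) q) = re_part (lm p (rm y q))"
proof -
  have diff: "rm (lm p y) q - lm p (rm y q) = - (rm (rm y p) q - rm y (omult p q))"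
    using assoc_cyclic(1,3)[where p=q and q=p and x=y] assoc_cyclic(3)[where p=p and q=q and x=y]
    unfolding assocM_def assocR_def by simp
  have "re_part (rm (lm p y) q) - re_part (lm p (rm y q))
      = re_part (- (rm (rm y p) q - rm y (omult p q)))"
    by (simp only: re_part_diff[symmetric] diff)
  also have "\<dots> = 0"
    by (simp add: re_part_minus re_part_diff re_part_rm_rm)
  finally show ?thesis by simp
qed

lemma right_expansion: "u = (\<Sum>i<8. R i (re_part (rm u (ocnj (obasis i)))))"
proof -
  have "u = (\<Sum>i<8. L i (rcoord u i))"
    by (rule decomposition)
  also have "\<dots> = (\<Sum>i<8. R i (re_part (rm u (ocnj (obasis i)))))"
    by (simp add: rcoord_def re_part_lm_eq_rm ReM_lm_eq_rm re_part_in_ReM)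
  finally show ?thesis .
qed

lemma eq_by_re_part:
  assumes "\<And>i. i < 8 \<Longrightarrow> re_part (rm u (ocnj (obasis i))) = re_part (rm v (ocnj (obasis i)))"
  shows "u = v"
  by (subst right_expansion[of u], subst right_expansion[of v]) (simp add: assms)

lemma paralinear_linear: "right_paralinear lm rm f \<Longrightarrow> linear f"
  unfolding right_paralinear_def by blast

lemma re_part_rm_paralinear:
  assumes "right_paralinear lm rm f"
  shows "re_part (rm (f x) q) = re_part (f (rm x q))"
proof -
  have "ReV lm rm (Bp rm q f x) = 0"
    using assms unfolding right_paralinear_def by blast
  then show ?thesis by (simp add: Bp_def ReV_eq_re_part re_part_diff)
qed

lemma paralinear_rm_ReM:
  assumes f: "right_paralinear lm rm f" and r: "r \<in> ReM lm rm"
  shows "f (rm r p) = rm (f r) p"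
proof (rule eq_by_re_part)
  fix i :: nat
  let ?q = "ocnj (obasis i)"
  have "re_part (rm (f (rm r p)) ?q) = re_part (f (rm r (omult p ?q)))"
    by (simp add: re_part_rm_paralinear[OF f] ReM_rm_rm[OF r])
  also have "\<dots> = re_part (rm (rm (f r) p) ?q)"
    by (simp add: re_part_rm_paralinear[OF f, symmetric] re_part_rm_rm)
  finally show "re_part (rm (f (rm r p)) ?q) = re_part (rm (rm (f r) p) ?q)" .
qed

lemma paralinear_expansion_ReM:
  assumes f: "right_paralinear lm rm f"
  shows "f x = (\<Sum>i<8. R i (f (rcoord x i)))"
proof -
  have "f x = f (\<Sum>i<8. R i (rcoord x i))"
    by (subst decomposition[of x]) (simp add: ReM_lm_eq_rm rcoord_in_ReM)
  also have "\<dots> = (\<Sum>i<8. R i (f (rcoord x i)))"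
    by (simp add: linear_sum[OF paralinear_linear[OF f]] paralinear_rm_ReM[OF f] rcoord_in_ReM)
  finally show ?thesis .
qed

lemma paralinear_expansion:
  assumes f: "right_paralinear lm rm f"
  shows "f x = (\<Sum>i<8. R i (re_part (f (rm x (ocnj (obasis i))))))"
  by (subst right_expansion[of "f x"]) (simp add: re_part_rm_paralinear[OF f])

lemma rsmult_ReM:
  assumes "right_paralinear lm rm f" and "r \<in> ReM lm rm"
  shows "rsmult lm rm f p r = rm (f r) p"
  by (simp add: rsmult_def Bp_def ReM_lm_eq_rm[OF assms(2)] paralinear_rm_ReM[OF assms])

lemma right_paralinear_rsmult:
  assumes f: "right_paralinear lm rm f"
  shows "right_paralinear lm rm (rsmult lm rm f p)"
proof -
  note f_lin = linear_add[OF paralinear_linear[OF f]] linear_diff[OF paralinear_linear[OF f]]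
    linear_scale[OF paralinear_linear[OF f]]
  have g: "rsmult lm rm f p x = f (lm p x) - (rm (f x) p - f (rm x p))" for x
    by (simp add: rsmult_def Bp_def)
  have "linear (rsmult lm rm f p)"
    by (rule linearI) (simp_all add: g lin_simps f_lin algebra_simps)
  moreover have "re_part (Bp rm q (rsmult lm rm f p) x) = 0" for q x
  proof -
    have "re_part (Bp rm q (rsmult lm rm f p) x) = re_part (f (rm (lm p x) q))
        - re_part (f (rm x (omult p q))) + re_part (f (rm (rm x p) q)) - re_part (f (lm p (rm x q)))"
      unfolding Bp_def g
      by (simp only: lin_simps re_part_add re_part_diff re_part_minus re_part_rm_paralinear[OF f]
          re_part_rm_rm; norm)
    also have "\<dots> = re_part (f (assocM lm rm p x q + assocR rm x p q))"
      unfolding assocM_def assocR_def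
      by (simp only: f_lin re_part_add re_part_diff; norm)
    also have "\<dots> = 0"
      using assoc_cyclic(1,3)[where p=q and q=p and x=x] assoc_cyclic(3)[where p=p and q=q and x=x]
      by (simp add: linear_0[OF paralinear_linear[OF f]] re_part_zero)
    finally show ?thesis .
  qed
  ultimately show ?thesis
    unfolding right_paralinear_def by (simp add: ReV_eq_re_part)
qed

lemma right_paralinear_lsmult:
  assumes f: "right_paralinear lm rm f"
  shows "right_paralinear lm rm (lsmult lm rm p f)"
proof -
  note f_lin = linear_add[OF paralinear_linear[OF f]] linear_diff[OF paralinear_linear[OF f]]
    linear_scale[OF paralinear_linear[OF f]]
  have h: "lsmult lm rm p f x = lm p (f x) + (rm (f x) p - f (rm x p))" for x
    by (simp add: lsmult_def Bp_def)
  have "linear (lsmult lm rm p f)"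
    by (rule linearI) (simp_all add: h lin_simps f_lin algebra_simps)
  moreover have "re_part (Bp rm q (lsmult lm rm p f) x) = 0" for q x
  proof -
    have "re_part (Bp rm q (lsmult lm rm p f) x) = re_part (f (rm x (omult q p)))
        + re_part (f (rm x (omult p q))) - re_part (f (rm (rm x p) q)) - re_part (f (rm (rm x q) p))"
      unfolding Bp_def h
      by (simp only: lin_simps re_part_add re_part_diff re_part_minus re_part_rm_lm re_part_lm_eq_rm
          re_part_rm_paralinear[OF f] re_part_rm_rm; norm)
    also have "\<dots> = - re_part (f (assocR rm x q p + assocR rm x p q))"
      unfolding assocR_def
      by (simp only: f_lin re_part_add re_part_diff re_part_minus; norm)
    also have "\<dots> = 0"
      using assocR_anticommute[of x q p] by (simp add: linear_0[OF paralinear_linear[OF f]] re_part_zero)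
    finally show ?thesis .
  qed
  ultimately show ?thesis
    unfolding right_paralinear_def by (simp add: ReV_eq_re_part)
qed

end

section \<open>Neumann series\<close>

lemma bounded_linear_funpow:
  fixes K :: "'a::real_normed_vector \<Rightarrow> 'a"
  assumes "bounded_linear K"
  shows "bounded_linear (K ^^ n)"
proof (induct n)
  case 0
  show ?case by (simp add: id_def)
next
  case (Suc n)
  show ?case using bounded_linear_compose[OF assms Suc] by (simp add: comp_def)
qed

lemma norm_funpow_le:
  fixes K :: "'a::real_normed_vector \<Rightarrow> 'a"
  assumes "bounded_linear K"
  shows "norm ((K ^^ n) v) \<le> onorm K ^ n * norm v"
proof (induct n)
  case (Suc n)
  have "norm ((K ^^ Suc n) v) \<le> onorm K * norm ((K ^^ n) v)"
    using onorm[OF assms, of "(K ^^ n) v"] by simp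
  also have "\<dots> \<le> onorm K * (onorm K ^ n * norm v)"
    using Suc onorm_pos_le[OF assms] by (rule mult_left_mono)
  finally show ?case by (simp add: mult.assoc)
qed simp

definition neumann_series :: "('a::real_normed_vector \<Rightarrow> 'a) \<Rightarrow> 'a \<Rightarrow> 'a" where
  "neumann_series K v = (\<Sum>n. (K ^^ n) v)"

context
  fixes K :: "'a::banach \<Rightarrow> 'a"
  assumes K: "bounded_linear K" and contraction: "onorm K < 1"
begin

lemma summable_funpow: "summable (\<lambda>n. (K ^^ n) v)"
proof (rule summable_comparison_test')
  show "summable (\<lambda>n. onorm K ^ n * norm v)"
    using contraction onorm_pos_le[OF K] by (simp add: summable_mult2)
  show "norm ((K ^^ n) v) \<le> onorm K ^ n * norm v" for n
    by (rule norm_funpow_le[OF K])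
qed

lemma suminf_funpow_Suc: "(\<Sum>n. K ((K ^^ n) v)) = neumann_series K v - v"
  unfolding neumann_series_def using suminf_split_head[OF summable_funpow, of v] by simp

lemma neumann_series_right_inverse: "neumann_series K v - K (neumann_series K v) = v"
proof -
  have "K (neumann_series K v) = (\<Sum>n. K ((K ^^ n) v))"
    unfolding neumann_series_def by (simp add: bounded_linear.suminf[OF K summable_funpow])
  then show ?thesis by (simp add: suminf_funpow_Suc)
qed

lemma neumann_series_left_inverse: "neumann_series K (v - K v) = v"
proof -
  have "(K ^^ n) (v - K v) = (K ^^ n) v - (K ^^ Suc n) v" for n
    using linear_diff[OF bounded_linear.linear[OF bounded_linear_funpow[OF K]]]
    by (simp add: funpow_swap1)
  then have "neumann_series K (v - K v) = neumann_series K v - (\<Sum>n. K ((K ^^ n) v))"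
    unfolding neumann_series_def
    using suminf_diff[OF summable_funpow summable_funpow[of "K v"]] by (simp add: funpow_swap1)
  also have "\<dots> = v"
    by (simp add: suminf_funpow_Suc)
  finally show ?thesis .
qed

lemma bounded_linear_neumann_series: "bounded_linear (neumann_series K)"
proof (rule bounded_linear_intro[where K="1 / (1 - onorm K)"])
  note lin = bounded_linear.linear[OF bounded_linear_funpow[OF K]]
  show "neumann_series K (x + y) = neumann_series K x + neumann_series K y" for x y
    unfolding neumann_series_def using suminf_add[OF summable_funpow summable_funpow]
    by (simp add: linear_add[OF lin])
  show "neumann_series K (r *\<^sub>R x) = r *\<^sub>R neumann_series K x" for r x
    unfolding neumann_series_def
    using bounded_linear.suminf[OF bounded_linear_scaleR_right summable_funpow]
    by (simp add: linear_scale[OF lin])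
  show "norm (neumann_series K x) \<le> norm x * (1 / (1 - onorm K))" for x
  proof -
    have "norm (neumann_series K x) \<le> (\<Sum>n. onorm K ^ n * norm x)"
      unfolding neumann_series_def
      using contraction onorm_pos_le[OF K]
      by (intro norm_suminf_le norm_funpow_le[OF K]) (simp add: summable_mult2)
    also have "\<dots> = norm x * (1 / (1 - onorm K))"
      using contraction onorm_pos_le[OF K] by (simp add: suminf_mult2[symmetric] suminf_geometric)
    finally show ?thesis .
  qed
qed

end

locale banach_octonion_bimodule =
  fixes lm :: "oct \<Rightarrow> 'v::banach \<Rightarrow> 'v" and rm :: "'v \<Rightarrow> oct \<Rightarrow> 'v"
  assumes banach_bimodule: "Banach_O_bimodule lm rm"

sublocale banach_octonion_bimodule \<subseteq> octonion_bimodule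
  using banach_bimodule by unfold_locales (simp add: Banach_O_bimodule_def)

context banach_octonion_bimodule
begin

lemma norm_lm: "norm (lm p x) = norm p * norm x" and norm_rm: "norm (rm x p) = norm p * norm x"
  using banach_bimodule unfolding Banach_O_bimodule_def by blast+

lemma bounded_linear_lm: "bounded_linear (lm p)"
  by (rule bounded_linear_intro[where K="norm p"]) (simp_all add: lin_simps norm_lm mult.commute)

lemma bounded_linear_rm: "bounded_linear (\<lambda>x. rm x p)"
  by (rule bounded_linear_intro[where K="norm p"]) (simp_all add: lin_simps norm_rm mult.commute)

lemma bounded_linear_re_part: "bounded_linear re_part"
proof -
  have L3: "bounded_linear (\<lambda>y. L a (L b (L c y)))" for a b c
    by (intro bounded_linear_compose[OF bounded_linear_lm] bounded_linear_lm)
  show ?thesis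
    unfolding re_part_def[abs_def]
    by (intro bounded_linear_compose[OF bounded_linear_scaleR_right] bounded_linear_add
        bounded_linear_sub bounded_linear_ident L3)
qed

lemma BRO_rsmult:
  assumes "f \<in> BRO lm rm"
  shows "rsmult lm rm f p \<in> BRO lm rm"
proof -
  have f: "bounded_linear f" "right_paralinear lm rm f"
    using assms by (simp_all add: BRO_def)
  have "bounded_linear (rsmult lm rm f p)"
    unfolding rsmult_def[abs_def] Bp_def
    by (intro bounded_linear_sub bounded_linear_compose[OF f(1)] bounded_linear_lm
        bounded_linear_compose[OF bounded_linear_rm] f(1) bounded_linear_rm)
  with right_paralinear_rsmult[OF f(2)] show ?thesis
    by (simp add: BRO_def)
qed

lemma BRO_lsmult:
  assumes "f \<in> BRO lm rm"
  shows "lsmult lm rm p f \<in> BRO lm rm"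
proof -
  have f: "bounded_linear f" "right_paralinear lm rm f"
    using assms by (simp_all add: BRO_def)
  have "bounded_linear (lsmult lm rm p f)"
    unfolding lsmult_def[abs_def] Bp_def
    by (intro bounded_linear_add bounded_linear_sub bounded_linear_compose[OF bounded_linear_lm] f(1)
        bounded_linear_compose[OF bounded_linear_rm] bounded_linear_compose[OF f(1)] bounded_linear_rm)
  with right_paralinear_lsmult[OF f(2)] show ?thesis
    by (simp add: BRO_def)
qed

lemma BRO_of_sums:
  assumes F: "bounded_linear F" and v: "\<And>n. right_paralinear lm rm (v n)"
    and sums: "\<And>x. (\<lambda>n. v n x) sums F x"
  shows "F \<in> BRO lm rm"
proof -
  have "re_part (rm (F x) p - F (rm x p)) = 0" for p x
  proof -
    have "(\<lambda>n. re_part (rm (v n x) p - v n (rm x p))) sums re_part (rm (F x) p - F (rm x p))"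
      by (intro bounded_linear.sums[OF bounded_linear_re_part] sums_diff sums
          bounded_linear.sums[OF bounded_linear_rm])
    moreover have "re_part (rm (v n x) p - v n (rm x p)) = 0" for n
      using re_part_rm_paralinear[OF v] by (simp add: re_part_diff)
    ultimately have "(\<lambda>n. 0) sums re_part (rm (F x) p - F (rm x p))"
      by simp
    then show ?thesis
      by (rule sums_unique2[OF _ sums_zero])
  qed
  then show ?thesis
    unfolding BRO_def right_paralinear_def Bp_def
    using F bounded_linear.linear[OF F] by (simp add: ReV_eq_re_part)
qed

lemma bounded_linear_oext:
  assumes "bounded_linear h"
  shows "bounded_linear (oext lm rm h)"
proof -
  have "oext lm rm h = (\<lambda>x. \<Sum>i<8. R i (h (re_part (lm (ocnj (obasis i)) x))))"
    by (simp add: fun_eq_iff oext_def odecomp_eq rcoord_def)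
  then show ?thesis
    by (simp only:) (intro bounded_linear_sum bounded_linear_compose[OF bounded_linear_rm]
        bounded_linear_compose[OF assms] bounded_linear_compose[OF bounded_linear_re_part] bounded_linear_lm)
qed

lemma bounded_linear_olif:
  assumes "bounded_linear h"
  shows "bounded_linear (olif lm rm (\<lambda>x. ReV lm rm (h x)))"
proof -
  have "olif lm rm (\<lambda>x. ReV lm rm (h x)) = (\<lambda>x. \<Sum>i<8. R i (re_part (h (rm x (ocnj (obasis i))))))"
    by (simp add: fun_eq_iff olif_def ReV_eq_re_part)
  then show ?thesis
    by (simp only:) (intro bounded_linear_sum bounded_linear_compose[OF bounded_linear_rm]
        bounded_linear_compose[OF bounded_linear_re_part] bounded_linear_compose[OF assms] bounded_linear_rm)
qed

section \<open>The resolvent series\<close>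

context
  fixes T :: "'v \<Rightarrow> 'v" and s :: oct
  assumes power_assoc: "power_associative lm rm T" and norm_T_less: "onorm T < norm s"
begin

abbreviation S :: "'v \<Rightarrow> 'v" where
  "S \<equiv> \<lambda>v. rm v s - T v"

lemma T_pow_BRO: "T ^^ n \<in> BRO lm rm"
  using power_assoc by (simp add: power_associative_def)

lemma bounded_linear_T: "bounded_linear T"
  using power_assoc by (simp add: power_associative_def BRO_def)

lemma s_nonzero: "s \<noteq> 0"
  using norm_T_less onorm_pos_le[OF bounded_linear_T] by auto

lemma norm_opow_T_pow_le:
  "norm (opow (oinv s) n) * norm ((T ^^ n) v) \<le> (onorm T / norm s) ^ n * norm v"
proof -
  have "norm (opow (oinv s) n) * norm ((T ^^ n) v) \<le> (1 / norm s) ^ n * (onorm T ^ n * norm v)"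
    by (simp add: norm_opow norm_oinv mult_left_mono norm_funpow_le[OF bounded_linear_T])
  then show ?thesis by (simp add: power_divide)
qed

lemma ratio_less_1: "0 \<le> onorm T / norm s" "onorm T / norm s < 1"
  using norm_T_less onorm_pos_le[OF bounded_linear_T] by (simp_all add: divide_less_eq)

lemma rm_s_oinv: "rm (rm y s) (oinv s) = y" "rm (rm y (oinv s)) s = y"
  by (simp_all add: rm_rm_oplane[OF self_in_oplane oinv_in_oplane]
      rm_rm_oplane[OF oinv_in_oplane self_in_oplane] omult_oinv[OF s_nonzero])

text \<open>\<open>S = R\<^sub>s \<circ> (1 - K)\<close> with \<open>K = R\<^bsub>s\<inverse>\<^esub> \<circ> T\<close> of norm at most \<open>\<parallel>T\<parallel> / \<bar>s\<bar> < 1\<close>, so \<open>S\<close> is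
  inverted by a Neumann series followed by \<open>R\<^bsub>s\<inverse>\<^esub>\<close>.\<close>

lemma resolvent:
  "bounded_linear (inv S)" "\<And>v. inv S (S v) = v" "\<And>y. S (inv S y) = y" "invertible_op S"
proof -
  define K where "K v = rm (T v) (oinv s)" for v
  have K: "bounded_linear K"
    unfolding K_def by (rule bounded_linear_compose[OF bounded_linear_rm bounded_linear_T])
  have "onorm K \<le> onorm T / norm s"
  proof (rule onorm_bound)
    show "0 \<le> onorm T / norm s"
      by (rule ratio_less_1)
    show "norm (K v) \<le> onorm T / norm s * norm v" for v
      using onorm[OF bounded_linear_T, of v] s_nonzero
      by (simp add: K_def norm_rm norm_oinv divide_right_mono)
  qed
  then have small: "onorm K < 1"
    using ratio_less_1 by linarith
  define g where "g y = neumann_series K (rm y (oinv s))" for y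
  have S_eq: "S w = rm (w - K w) s" for w
    by (simp add: K_def lin_simps rm_s_oinv)
  have gS: "g (S v) = v" for v
    unfolding g_def S_eq by (simp add: rm_s_oinv neumann_series_left_inverse[OF K small])
  have Sg: "S (g y) = y" for y
    unfolding S_eq g_def by (simp add: rm_s_oinv neumann_series_right_inverse[OF K small])
  have g: "bounded_linear g"
    unfolding g_def[abs_def]
    by (rule bounded_linear_compose[OF bounded_linear_neumann_series[OF K small] bounded_linear_rm])
  have inv_S: "inv S = g"
    by (rule inv_unique_comp) (simp_all add: fun_eq_iff gS Sg)
  show "bounded_linear (inv S)" "\<And>v. inv S (S v) = v" "\<And>y. S (inv S y) = y"
    by (simp_all add: inv_S g gS Sg)
  show "invertible_op S"
    unfolding invertible_op_def
    using g gS Sg bounded_linear_sub[OF bounded_linear_rm bounded_linear_T]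
    by (auto simp: fun_eq_iff)
qed

lemma paralinear_T_pow: "right_paralinear lm rm (T ^^ n)"
  using T_pow_BRO by (simp add: BRO_def)

lemma tendsto_geometric_bound:
  assumes "\<And>n. norm (f n) \<le> C * (onorm T / norm s) ^ n"
  shows "f \<longlonglongrightarrow> 0"
proof (rule Lim_null_comparison)
  show "\<forall>\<^sub>F n in sequentially. norm (f n) \<le> C * (onorm T / norm s) ^ n"
    using assms by simp
  show "(\<lambda>n. C * (onorm T / norm s) ^ n) \<longlonglongrightarrow> 0"
    using ratio_less_1 by (intro tendsto_mult_right_zero LIMSEQ_power_zero) simp
qed

lemma right_series_ReM:
  assumes r: "r \<in> ReM lm rm"
  shows "(\<lambda>n. rsmult lm rm (T ^^ n) (opow (oinv s) (Suc n)) r) sums inv S r"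
proof -
  define a where "a n = rm ((T ^^ n) r) (opow (oinv s) n)" for n
  define b where "b n = rm ((T ^^ n) r) (opow (oinv s) (Suc n))" for n
  have S_b: "S (b n) = a n - a (Suc n)" for n
  proof -
    have "rm (b n) s = a n"
      by (simp only: a_def b_def rm_rm_oplane[OF opow_in_oplane[OF oinv_in_oplane] self_in_oplane]
          omult_opow_oinv(2)[OF s_nonzero])
    moreover have "T (b n) = (T ^^ Suc n) (rm r (opow (oinv s) (Suc n)))"
      by (simp add: b_def paralinear_rm_ReM[OF paralinear_T_pow r])
    then have "T (b n) = a (Suc n)"
      by (simp only: paralinear_rm_ReM[OF paralinear_T_pow r] a_def)
    ultimately show ?thesis by simp
  qed
  have b_bound: "norm (b n) \<le> 1 / norm s * ((onorm T / norm s) ^ n * norm r)" for n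
  proof -
    have "norm (b n) = 1 / norm s * (norm (opow (oinv s) n) * norm ((T ^^ n) r))"
      by (simp add: b_def norm_rm norm_omult norm_oinv)
    also have "\<dots> \<le> 1 / norm s * ((onorm T / norm s) ^ n * norm r)"
      by (rule mult_left_mono[OF norm_opow_T_pow_le]) simp
    finally show ?thesis .
  qed
  have "summable b"
  proof (rule summable_comparison_test')
    show "summable (\<lambda>n. 1 / norm s * ((onorm T / norm s) ^ n * norm r))"
      using ratio_less_1 by (intro summable_mult summable_mult2 summable_geometric) simp
  qed (rule b_bound)
  have "a \<longlonglongrightarrow> 0"
    using norm_opow_T_pow_le
    by (intro tendsto_geometric_bound[of _ "norm r"]) (simp add: a_def norm_rm mult.commute)
  then have "(\<lambda>n. S (b n)) sums r"
    using telescope_sums'[of a 0] by (simp add: S_b a_def)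
  moreover have "(\<lambda>n. S (b n)) sums S (suminf b)"
    using bounded_linear.sums[OF bounded_linear_sub[OF bounded_linear_rm bounded_linear_T]
        summable_sums[OF \<open>summable b\<close>]] .
  ultimately have "r = S (suminf b)"
    by (rule sums_unique2)
  then have "suminf b = inv S r"
    using resolvent(2)[of "suminf b"] by simp
  moreover have "rsmult lm rm (T ^^ n) (opow (oinv s) (Suc n)) r = b n" for n
    by (simp only: b_def rsmult_ReM[OF paralinear_T_pow r])
  ultimately show ?thesis
    using summable_sums[OF \<open>summable b\<close>] by simp
qed

lemma left_series_re_part:
  "(\<lambda>n. re_part (lsmult lm rm (opow (oinv s) (Suc n)) (T ^^ n) w)) sums re_part (inv S w)"
proof -
  define z where "z = inv S w"
  define c where "c n = re_part (lm (opow (oinv s) n) ((T ^^ n) z))" for n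
  have step: "re_part (lsmult lm rm (opow (oinv s) (Suc n)) (T ^^ n) w) = c n - c (Suc n)" for n
  proof -
    let ?p = "opow (oinv s) (Suc n)"
    have "(T ^^ n) w = (T ^^ n) (rm z s - T z)"
      using resolvent(3)[of w] by (simp add: z_def)
    also have "\<dots> = (T ^^ n) (rm z s) - (T ^^ Suc n) z"
      by (simp add: linear_diff[OF paralinear_linear[OF paralinear_T_pow]] funpow_swap1)
    finally have "(T ^^ n) w = (T ^^ n) (rm z s) - (T ^^ Suc n) z" .
    moreover have "re_part (lm ?p ((T ^^ n) (rm z s))) = c n"
      by (simp only: c_def re_part_lm_eq_rm re_part_rm_paralinear[OF paralinear_T_pow]
          rm_rm_oplane[OF self_in_oplane opow_in_oplane[OF oinv_in_oplane]] omult_opow_oinv(1)[OF s_nonzero])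
    moreover have "re_part (lsmult lm rm ?p (T ^^ n) w) = re_part (lm ?p ((T ^^ n) w))"
      using re_part_rm_paralinear[OF paralinear_T_pow, where x=w and q="?p"]
      by (simp add: lsmult_def Bp_def re_part_add re_part_diff)
    ultimately show ?thesis
      by (simp add: lin_simps re_part_diff c_def)
  qed
  obtain B where B: "\<And>x. norm (re_part x) \<le> norm x * B" and "0 < B"
    using bounded_linear.pos_bounded[OF bounded_linear_re_part] by blast
  have "norm (c n) \<le> B * norm z * (onorm T / norm s) ^ n" for n
  proof -
    have "norm (c n) \<le> norm (opow (oinv s) n) * norm ((T ^^ n) z) * B"
      using B[of "lm (opow (oinv s) n) ((T ^^ n) z)"] by (simp add: c_def norm_lm)
    also have "\<dots> \<le> (onorm T / norm s) ^ n * norm z * B"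
      using norm_opow_T_pow_le[of n z] \<open>0 < B\<close> by (intro mult_right_mono) auto
    finally show ?thesis by (simp add: mult_ac)
  qed
  then have "c \<longlonglongrightarrow> 0"
    by (rule tendsto_geometric_bound)
  then have "(\<lambda>n. c n - c (Suc n)) sums c 0"
    using telescope_sums'[of c 0] by simp
  moreover have "c 0 = re_part (inv S w)"
    by (simp add: c_def z_def)
  ultimately show ?thesis
    by (simp only: step)
qed

lemma right_series:
  "(\<lambda>n. rsmult lm rm (T ^^ n) (opow (oinv s) (Suc n)) x) sums right_reg_inv lm rm S x"
proof -
  let ?f = "\<lambda>n. rsmult lm rm (T ^^ n) (opow (oinv s) (Suc n))"
  have "?f n x = (\<Sum>i<8. R i (?f n (rcoord x i)))" for n
    by (rule paralinear_expansion_ReM[OF right_paralinear_rsmult[OF paralinear_T_pow]])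
  moreover have "(\<lambda>n. \<Sum>i<8. R i (?f n (rcoord x i))) sums (\<Sum>i<8. R i (inv S (rcoord x i)))"
    by (intro sums_sum bounded_linear.sums[OF bounded_linear_rm] right_series_ReM rcoord_in_ReM)
  moreover have "right_reg_inv lm rm S x = (\<Sum>i<8. R i (inv S (rcoord x i)))"
    by (simp add: right_reg_inv_def oext_def odecomp_eq)
  ultimately show ?thesis by simp
qed

lemma left_series:
  "(\<lambda>n. lsmult lm rm (opow (oinv s) (Suc n)) (T ^^ n) x) sums left_reg_inv lm rm S x"
proof -
  let ?f = "\<lambda>n. lsmult lm rm (opow (oinv s) (Suc n)) (T ^^ n)"
  have "?f n x = (\<Sum>i<8. R i (re_part (?f n (rm x (ocnj (obasis i))))))" for n
    by (rule paralinear_expansion[OF right_paralinear_lsmult[OF paralinear_T_pow]])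
  moreover have "(\<lambda>n. \<Sum>i<8. R i (re_part (?f n (rm x (ocnj (obasis i))))))
      sums (\<Sum>i<8. R i (re_part (inv S (rm x (ocnj (obasis i))))))"
    by (intro sums_sum bounded_linear.sums[OF bounded_linear_rm] left_series_re_part)
  moreover have "left_reg_inv lm rm S x = (\<Sum>i<8. R i (re_part (inv S (rm x (ocnj (obasis i))))))"
    by (simp add: left_reg_inv_def olif_def ReV_eq_re_part)
  ultimately show ?thesis by simp
qed

lemma resolvent_series:
  "invertible_op S
    \<and> right_reg_inv lm rm S \<in> BRO lm rm
    \<and> left_reg_inv lm rm S \<in> BRO lm rm
    \<and> (\<forall>n. rsmult lm rm (T ^^ n) (opow (oinv s) (Suc n)) \<in> BRO lm rm
         \<and> lsmult lm rm (opow (oinv s) (Suc n)) (T ^^ n) \<in> BRO lm rm)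
    \<and> (\<forall>x. (\<lambda>n. rsmult lm rm (T ^^ n) (opow (oinv s) (Suc n)) x) sums (right_reg_inv lm rm S x))
    \<and> (\<forall>x. (\<lambda>n. lsmult lm rm (opow (oinv s) (Suc n)) (T ^^ n) x) sums (left_reg_inv lm rm S x))"
proof (intro conjI allI)
  show "right_reg_inv lm rm S \<in> BRO lm rm"
    using BRO_of_sums[OF _ right_paralinear_rsmult[OF paralinear_T_pow] right_series]
      bounded_linear_oext[OF resolvent(1)] by (simp add: right_reg_inv_def)
  show "left_reg_inv lm rm S \<in> BRO lm rm"
    using BRO_of_sums[OF _ right_paralinear_lsmult[OF paralinear_T_pow] left_series]
      bounded_linear_olif[OF resolvent(1)] by (simp add: left_reg_inv_def)
qed (simp_all add: resolvent(4) BRO_rsmult BRO_lsmult T_pow_BRO right_series left_series del: opow.simps)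

end

end

theorem mainTheorem3:
  fixes lm :: "oct \<Rightarrow> 'v::banach \<Rightarrow> 'v" and rm :: "'v \<Rightarrow> oct \<Rightarrow> 'v"
    and T :: "'v \<Rightarrow> 'v" and s :: oct
  assumes "Banach_O_bimodule lm rm"
    and "power_associative lm rm T"
    and "norm s > onorm T"
  shows "invertible_op (\<lambda>v. rm v s - T v)
    \<and> right_reg_inv lm rm (\<lambda>v. rm v s - T v) \<in> BRO lm rm
    \<and> left_reg_inv lm rm (\<lambda>v. rm v s - T v) \<in> BRO lm rm
    \<and> (\<forall>n. rsmult lm rm (T ^^ n) (opow (oinv s) (Suc n)) \<in> BRO lm rm
         \<and> lsmult lm rm (opow (oinv s) (Suc n)) (T ^^ n) \<in> BRO lm rm)
    \<and> (\<forall>x. (\<lambda>n. rsmult lm rm (T ^^ n) (opow (oinv s) (Suc n)) x)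
             sums (right_reg_inv lm rm (\<lambda>v. rm v s - T v) x))
    \<and> (\<forall>x. (\<lambda>n. lsmult lm rm (opow (oinv s) (Suc n)) (T ^^ n) x)
             sums (left_reg_inv lm rm (\<lambda>v. rm v s - T v) x))"
proof -
  interpret banach_octonion_bimodule lm rm
    by unfold_locales (rule assms(1))
  show ?thesis
    using resolvent_series[OF assms(2,3)] .
qed

end
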